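(* Every maximal (with respect to inclusion) $\boldsymbol\pi$-clique in $\mathcal L$ is either a flat or a semibundle $\mathcal L_U(X)$, where $X$ is a maximal strong subspace of $\mathfrak M$ and $U\in\overline X$.
   Context: Setup. Let $V$ be a vector space of finite dimension $n\ge 3$ over a division ring; $\mathrm{Sub}_j(V)$ is the set of $j$-dimensional subspaces of $V$. Fix $k$ with $1<k<n-1$, a subspace $W$ of $V$ with $w:=\dim W$, and an integer $m$ with $k-(n-w)\le m\le\min\{k,w\}$. For $H\in\mathrm{Sub}_{k-1}(V)$, $B\in\mathrm{Sub}_{k+1}(V)$, $H\subset B$, the $k$-pencil is $\mathbf p(H,B)=\{U\in\mathrm{Sub}_k(V):H\subset U\subset B\}$; the Grassmann space $\mathbf P_k(V)$ has points $\mathrm{Sub}_k(V)$ and lines the $k$-pencils. The spine space $\mathfrak M$ has point set $S=\{U\in\mathrm{Sub}_k(V):\dim(U\cap W)=m\}$ and line set $\mathcal L=\{\ell\cap S:\ell\text{ a $k$-pencil},\ |\ell\cap S|\ge2\}$; points of $\mathrm{Sub}_k(V)\setminus S$ are improper. Each $L\in\mathcal L$ lies in a unique $k$-pencil $\overline L$. A subspace of $\mathfrak M$ is a set $X\subseteq S$ containing every line meeting it in at least two points; it is strong if its points are pairwise collinear; $\overline X$ is the smallest subspace of $\mathbf P_k(V)$ containing $X$. A plane of $\mathbf P_k(V)$ is a set $\{U\in\mathrm{Sub}_k(V):Y\subset U\subset Z\}$ with $(\dim Y,\dim Z)=(k-2,k+1)$ or $(k-1,k+2)$; a plane of $\mathfrak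 M$ is $E=P\cap S$ with $P$ a plane of $\mathbf P_k(V)$, containing two distinct lines. $L_1\,\boldsymbol\pi\,L_2$ iff some plane of $\mathfrak M$ contains both. A $\boldsymbol\pi$-clique is a set of lines pairwise $\boldsymbol\pi$-related. A flat is $\mathcal L(E)=\{L\in\mathcal L:L\subseteq E\}$ for a plane $E$. For a strong subspace $X$ and $U\in\overline X$, the semibundle is $\mathcal L_U(X)=\{L\in\mathcal L:U\in\overline L,\ L\subseteq X\}$. *)

theory Defs
  imports Main "HOL-Library.Function_Algebras"
begin

text \<open>Vectors are coordinate functions nat => D vanishing from index n on;
 scalars act from the left.\<close>

definition vecs :: "nat \<Rightarrow> (nat \<Rightarrow> 'a::division_ring) set" where
  "vecs n = {v. \<forall>i\<ge>n. v i = 0}"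

definition smult :: "'a::division_ring \<Rightarrow> (nat \<Rightarrow> 'a) \<Rightarrow> (nat \<Rightarrow> 'a)" where
  "smult c v = (\<lambda>i. c * v i)"

definition lsubspace :: "nat \<Rightarrow> (nat \<Rightarrow> 'a::division_ring) set \<Rightarrow> bool" where
  "lsubspace n U \<longleftrightarrow> U \<subseteq> vecs n \<and> 0 \<in> U \<and> (\<forall>x\<in>U. \<forall>y\<in>U. x + y \<in> U)
     \<and> (\<forall>c. \<forall>x\<in>U. smult c x \<in> U)"

definition lin_indep :: "(nat \<Rightarrow> 'a::division_ring) set \<Rightarrow> bool" where
  "lin_indep B \<longleftrightarrow> (\<forall>F c. finite F \<and> F \<subseteq> B \<and> (\<Sum>s\<in>F. smult (c s) s) = 0 \<longrightarrow> (\<forall>s\<in>F. c s = 0))"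

definition ldim :: "(nat \<Rightarrow> 'a::division_ring) set \<Rightarrow> nat" where
  "ldim U = Max (card ` {B. finite B \<and> B \<subseteq> U \<and> lin_indep B})"

definition Sub :: "nat \<Rightarrow> nat \<Rightarrow> (nat \<Rightarrow> 'a::division_ring) set set" where
  "Sub n j = {U. lsubspace n U \<and> ldim U = j}"

definition pencil :: "nat \<Rightarrow> nat \<Rightarrow> (nat \<Rightarrow> 'a::division_ring) set \<Rightarrow> (nat \<Rightarrow> 'a) set
    \<Rightarrow> (nat \<Rightarrow> 'a) set set" where
  "pencil n k H B = {U \<in> Sub n k. H \<subseteq> U \<and> U \<subseteq> B}"

definition is_pencil :: "nat \<Rightarrow> nat \<Rightarrow> (nat \<Rightarrow> 'a::division_ring) set set \<Rightarrow> bool" where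
  "is_pencil n k l \<longleftrightarrow> (\<exists>H B. H \<in> Sub n (k - 1) \<and> B \<in> Sub n (k + 1) \<and> H \<subseteq> B
      \<and> l = pencil n k H B)"

definition two_pts :: "'b set \<Rightarrow> bool" where
  "two_pts A \<longleftrightarrow> (\<exists>x y. x \<in> A \<and> y \<in> A \<and> x \<noteq> y)"

definition grass_subspace :: "nat \<Rightarrow> nat \<Rightarrow> (nat \<Rightarrow> 'a::division_ring) set set \<Rightarrow> bool" where
  "grass_subspace n k Y \<longleftrightarrow> Y \<subseteq> Sub n k \<and>
     (\<forall>l. is_pencil n k l \<and> two_pts (l \<inter> Y) \<longrightarrow> l \<subseteq> Y)"

definition grass_closure :: "nat \<Rightarrow> nat \<Rightarrow> (nat \<Rightarrow> 'a::division_ring) set set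
    \<Rightarrow> (nat \<Rightarrow> 'a) set set" where
  "grass_closure n k X = \<Inter>{Y. grass_subspace n k Y \<and> X \<subseteq> Y}"

definition grass_plane :: "nat \<Rightarrow> nat \<Rightarrow> (nat \<Rightarrow> 'a::division_ring) set set \<Rightarrow> bool" where
  "grass_plane n k P \<longleftrightarrow> (\<exists>Y Z. lsubspace n Y \<and> lsubspace n Z \<and> Y \<subseteq> Z \<and>
     ((ldim Y = k - 2 \<and> ldim Z = k + 1) \<or> (ldim Y = k - 1 \<and> ldim Z = k + 2)) \<and>
     P = {U \<in> Sub n k. Y \<subseteq> U \<and> U \<subseteq> Z})"

definition spoints :: "nat \<Rightarrow> nat \<Rightarrow> (nat \<Rightarrow> 'a::division_ring) set \<Rightarrow> nat
    \<Rightarrow> (nat \<Rightarrow> 'a) set set" where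
  "spoints n k W m = {U \<in> Sub n k. ldim (U \<inter> W) = m}"

definition slines :: "nat \<Rightarrow> nat \<Rightarrow> (nat \<Rightarrow> 'a::division_ring) set \<Rightarrow> nat
    \<Rightarrow> (nat \<Rightarrow> 'a) set set set" where
  "slines n k W m = {l \<inter> spoints n k W m | l. is_pencil n k l \<and> two_pts (l \<inter> spoints n k W m)}"

definition pencil_of :: "nat \<Rightarrow> nat \<Rightarrow> (nat \<Rightarrow> 'a::division_ring) set set
    \<Rightarrow> (nat \<Rightarrow> 'a) set set" where
  "pencil_of n k L = (THE l. is_pencil n k l \<and> L \<subseteq> l)"

definition spine_subspace :: "nat \<Rightarrow> nat \<Rightarrow> (nat \<Rightarrow> 'a::division_ring) set \<Rightarrow> nat
    \<Rightarrow> (nat \<Rightarrow> 'a) set set \<Rightarrow> bool" where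
  "spine_subspace n k W m X \<longleftrightarrow> X \<subseteq> spoints n k W m \<and>
     (\<forall>L \<in> slines n k W m. two_pts (L \<inter> X) \<longrightarrow> L \<subseteq> X)"

definition strong_subspace :: "nat \<Rightarrow> nat \<Rightarrow> (nat \<Rightarrow> 'a::division_ring) set \<Rightarrow> nat
    \<Rightarrow> (nat \<Rightarrow> 'a) set set \<Rightarrow> bool" where
  "strong_subspace n k W m X \<longleftrightarrow> spine_subspace n k W m X \<and>
     (\<forall>U\<in>X. \<forall>U'\<in>X. U \<noteq> U' \<longrightarrow> (\<exists>L \<in> slines n k W m. U \<in> L \<and> U' \<in> L))"

definition max_strong_subspace :: "nat \<Rightarrow> nat \<Rightarrow> (nat \<Rightarrow> 'a::division_ring) set \<Rightarrow> nat
    \<Rightarrow> (nat \<Rightarrow> 'a) set set \<Rightarrow> bool" where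
  "max_strong_subspace n k W m X \<longleftrightarrow> strong_subspace n k W m X \<and>
     (\<forall>X'. strong_subspace n k W m X' \<and> X \<subseteq> X' \<longrightarrow> X' = X)"

definition spine_plane :: "nat \<Rightarrow> nat \<Rightarrow> (nat \<Rightarrow> 'a::division_ring) set \<Rightarrow> nat
    \<Rightarrow> (nat \<Rightarrow> 'a) set set \<Rightarrow> bool" where
  "spine_plane n k W m E \<longleftrightarrow> (\<exists>P. grass_plane n k P \<and> E = P \<inter> spoints n k W m) \<and>
     (\<exists>L1 L2. L1 \<in> slines n k W m \<and> L2 \<in> slines n k W m \<and> L1 \<noteq> L2 \<and> L1 \<subseteq> E \<and> L2 \<subseteq> E)"

definition pi_rel :: "nat \<Rightarrow> nat \<Rightarrow> (nat \<Rightarrow> 'a::division_ring) set \<Rightarrow> nat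
    \<Rightarrow> (nat \<Rightarrow> 'a) set set \<Rightarrow> (nat \<Rightarrow> 'a) set set \<Rightarrow> bool" where
  "pi_rel n k W m L1 L2 \<longleftrightarrow> (\<exists>E. spine_plane n k W m E \<and> L1 \<subseteq> E \<and> L2 \<subseteq> E)"

definition pi_clique :: "nat \<Rightarrow> nat \<Rightarrow> (nat \<Rightarrow> 'a::division_ring) set \<Rightarrow> nat
    \<Rightarrow> (nat \<Rightarrow> 'a) set set set \<Rightarrow> bool" where
  "pi_clique n k W m K \<longleftrightarrow> K \<subseteq> slines n k W m \<and>
     (\<forall>L1\<in>K. \<forall>L2\<in>K. L1 \<noteq> L2 \<longrightarrow> pi_rel n k W m L1 L2)"

definition max_pi_clique :: "nat \<Rightarrow> nat \<Rightarrow> (nat \<Rightarrow> 'a::division_ring) set \<Rightarrow> nat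
    \<Rightarrow> (nat \<Rightarrow> 'a) set set set \<Rightarrow> bool" where
  "max_pi_clique n k W m K \<longleftrightarrow> pi_clique n k W m K \<and>
     (\<forall>K'. pi_clique n k W m K' \<and> K \<subseteq> K' \<longrightarrow> K' = K)"

definition flat :: "nat \<Rightarrow> nat \<Rightarrow> (nat \<Rightarrow> 'a::division_ring) set \<Rightarrow> nat
    \<Rightarrow> (nat \<Rightarrow> 'a) set set \<Rightarrow> (nat \<Rightarrow> 'a) set set set" where
  "flat n k W m E = {L \<in> slines n k W m. L \<subseteq> E}"

definition semibundle :: "nat \<Rightarrow> nat \<Rightarrow> (nat \<Rightarrow> 'a::division_ring) set \<Rightarrow> nat
    \<Rightarrow> (nat \<Rightarrow> 'a) set \<Rightarrow> (nat \<Rightarrow> 'a) set set \<Rightarrow> (nat \<Rightarrow> 'a) set set set" where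
  "semibundle n k W m U X = {L \<in> slines n k W m. U \<in> pencil_of n k L \<and> L \<subseteq> X}"

end

theory Submission
  imports Defs
begin

text \<open>Two distinct lines are \<pi>-related iff their pencils have the same vertex H and tops
  meeting in a k-space, or the same top B and vertices spanning a k-space. Hence the lines of a
  \<pi>-clique K all share their vertex or all share their top, and the points on K are pairwise
  adjacent. If the pencils of K have a common point U, Zorn's lemma extends the points of K to a
  maximal set X of pairwise adjacent points; X is a maximal strong subspace with U in its closure,
  and K \<subseteq> L_U(X) is an equality by maximality of K. Otherwise no k-space lies in all pencils of K;
  then the tops (vertices) of its lines, a family of pairwise adjacent subspaces, all lie in one
  (k+2)-space Z (all contain one (k-2)-space Y), and K is the flat of the plane [H,Z] ([Y,B]).\<close>

section \<open>Subspaces of D^n and their dimension\<close>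

lemma smult_apply [simp]: "smult c v i = c * v i"
  by (simp add: smult_def)

lemma smult_zero [simp]: "smult 0 v = 0"
  by (simp add: fun_eq_iff)

lemma smult_one [simp]: "smult 1 v = v"
  by (simp add: fun_eq_iff)

lemma smult_smult [simp]: "smult c (smult d v) = smult (c * d) v"
  by (simp add: fun_eq_iff algebra_simps)

lemma smult_add_right: "smult c (v + w) = smult c v + smult c w"
  by (simp add: fun_eq_iff algebra_simps)

lemma smult_add_left: "smult (c + d) v = smult c v + smult d v"
  by (simp add: fun_eq_iff algebra_simps)

lemma smult_diff_right: "smult c (v - w) = smult c v - smult c w"
  by (simp add: fun_eq_iff algebra_simps)

lemma smult_diff_left: "smult (c - d) v = smult c v - smult d v"
  by (simp add: fun_eq_iff algebra_simps)

lemma smult_minus_left: "smult (- c) v = - smult c v"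
  by (simp add: fun_eq_iff)

lemma smult_sum_left: "smult (sum a F) v = (\<Sum>s\<in>F. smult (a s) v)"
proof -
  have "(sum f F) i = (\<Sum>s\<in>F. f s i)" for f :: "'b \<Rightarrow> nat \<Rightarrow> 'a::division_ring" and i
    by (induction F rule: infinite_finite_induct) auto
  then show ?thesis
    by (simp add: fun_eq_iff sum_distrib_right)
qed

lemma lsubspace_vecs: "lsubspace n U \<Longrightarrow> U \<subseteq> vecs n"
  and lsubspace_0: "lsubspace n U \<Longrightarrow> 0 \<in> U"
  and lsubspace_add: "lsubspace n U \<Longrightarrow> x \<in> U \<Longrightarrow> y \<in> U \<Longrightarrow> x + y \<in> U"
  and lsubspace_smult: "lsubspace n U \<Longrightarrow> x \<in> U \<Longrightarrow> smult c x \<in> U"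
  unfolding lsubspace_def by auto

lemma lsubspace_minus: "lsubspace n U \<Longrightarrow> x \<in> U \<Longrightarrow> - x \<in> U"
  using lsubspace_smult[of n U x "-1"] by (simp add: smult_minus_left)

lemma lsubspace_diff: "lsubspace n U \<Longrightarrow> x \<in> U \<Longrightarrow> y \<in> U \<Longrightarrow> x - y \<in> U"
  using lsubspace_add[of n U x "- y"] lsubspace_minus[of n U y] by simp

lemma lsubspace_sum: "lsubspace n U \<Longrightarrow> (\<And>s. s \<in> F \<Longrightarrow> f s \<in> U) \<Longrightarrow> sum f F \<in> U"
  by (induction F rule: infinite_finite_induct) (auto intro: lsubspace_0 lsubspace_add)

lemma lsubspace_vecs_le: "j \<le> n \<Longrightarrow> lsubspace n (vecs j)"
  unfolding lsubspace_def vecs_def by auto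

lemma lsubspace_zero_space: "lsubspace n {0}"
  unfolding lsubspace_def vecs_def by auto

lemma lsubspace_Int: "lsubspace n A \<Longrightarrow> lsubspace n B \<Longrightarrow> lsubspace n (A \<inter> B)"
  unfolding lsubspace_def by auto

definition lsum :: "(nat \<Rightarrow> 'a::division_ring) set \<Rightarrow> (nat \<Rightarrow> 'a) set \<Rightarrow> (nat \<Rightarrow> 'a) set" where
  "lsum A B = {a + b | a b. a \<in> A \<and> b \<in> B}"

definition span1 :: "(nat \<Rightarrow> 'a::division_ring) \<Rightarrow> (nat \<Rightarrow> 'a) set" where
  "span1 x = range (\<lambda>t. smult t x)"

lemma lsumI: "a \<in> A \<Longrightarrow> b \<in> B \<Longrightarrow> a + b \<in> lsum A B"
  unfolding lsum_def by blast

lemma lsumE: "x \<in> lsum A B \<Longrightarrow> (\<And>a b. x = a + b \<Longrightarrow> a \<in> A \<Longrightarrow> b \<in> B \<Longrightarrow> P) \<Longrightarrow> P"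
  unfolding lsum_def by blast

lemma lsum_mono: "A \<subseteq> A' \<Longrightarrow> B \<subseteq> B' \<Longrightarrow> lsum A B \<subseteq> lsum A' B'"
  unfolding lsum_def by blast

lemma lsum_upper1: "lsubspace n B \<Longrightarrow> A \<subseteq> lsum A B"
  using lsumI[of _ A 0 B] lsubspace_0 by fastforce

lemma lsum_upper2: "lsubspace n A \<Longrightarrow> B \<subseteq> lsum A B"
  using lsumI[of 0 A _ B] lsubspace_0 by fastforce

lemma lsum_least: "lsubspace n C \<Longrightarrow> A \<subseteq> C \<Longrightarrow> B \<subseteq> C \<Longrightarrow> lsum A B \<subseteq> C"
  unfolding lsum_def using lsubspace_add by blast

lemma span1_self: "x \<in> span1 x"
  unfolding span1_def by (metis rangeI smult_one)

lemma span1_least: "lsubspace n C \<Longrightarrow> x \<in> C \<Longrightarrow> span1 x \<subseteq> C"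
  unfolding span1_def using lsubspace_smult by blast

lemma lsubspace_lsum:
  assumes A: "lsubspace n A" and B: "lsubspace n B"
  shows "lsubspace n (lsum A B)"
  unfolding lsubspace_def
proof (intro conjI ballI allI)
  show "lsum A B \<subseteq> vecs n"
    using lsubspace_vecs[OF A] lsubspace_vecs[OF B] unfolding lsum_def vecs_def by fastforce
  show "0 \<in> lsum A B"
    using lsumI[OF lsubspace_0[OF A] lsubspace_0[OF B]] by simp
next
  fix x y assume "x \<in> lsum A B" "y \<in> lsum A B"
  then obtain a b a' b' where "x = a + b" "y = a' + b'" "a \<in> A" "b \<in> B" "a' \<in> A" "b' \<in> B"
    by (blast elim: lsumE)
  then show "x + y \<in> lsum A B"
    using lsumI[of "a + a'" A "b + b'" B] lsubspace_add[OF A] lsubspace_add[OF B]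
    by (simp add: algebra_simps)
next
  fix c x assume "x \<in> lsum A B"
  then obtain a b where "x = a + b" "a \<in> A" "b \<in> B"
    by (blast elim: lsumE)
  then show "smult c x \<in> lsum A B"
    using lsumI[of "smult c a" A "smult c b" B] lsubspace_smult[OF A] lsubspace_smult[OF B]
    by (simp add: smult_add_right)
qed

lemma lsubspace_span1: "x \<in> vecs n \<Longrightarrow> lsubspace n (span1 x)"
  unfolding lsubspace_def span1_def vecs_def
  by (auto simp: image_iff smult_add_left[symmetric] intro: exI[of _ 0])

lemma lin_indepD:
  "lin_indep I \<Longrightarrow> finite F \<Longrightarrow> F \<subseteq> I \<Longrightarrow> (\<Sum>s\<in>F. smult (c s) s) = 0 \<Longrightarrow> s \<in> F \<Longrightarrow> c s = 0"
  unfolding lin_indep_def by blast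

lemma lin_indep_empty: "lin_indep {}"
  unfolding lin_indep_def by auto

lemma lin_indep_insert:
  assumes A: "lsubspace n A" and IA: "I \<subseteq> A" and ind: "lin_indep I" and xA: "x \<notin> A"
  shows "lin_indep (insert x I)"
  unfolding lin_indep_def
proof (intro allI impI, elim conjE)
  fix F c assume F: "finite F" "F \<subseteq> insert x I" and sum0: "(\<Sum>s\<in>F. smult (c s) s) = 0"
  define rest where "rest = (\<Sum>s\<in>F - {x}. smult (c s) s)"
  have rest: "rest \<in> A"
    unfolding rest_def using F IA by (intro lsubspace_sum[OF A] lsubspace_smult[OF A]) auto
  have cx: "c x = 0" if "x \<in> F"
  proof (rule ccontr)
    assume "c x \<noteq> 0"
    have "smult (c x) x = - rest"
      using sum0 \<open>x \<in> F\<close> F(1) by (simp add: sum.remove rest_def eq_neg_iff_add_eq_0)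
    then have "x = smult (inverse (c x)) (- rest)"
      using \<open>c x \<noteq> 0\<close> by (metis left_inverse smult_one smult_smult)
    then show False
      using xA lsubspace_smult[OF A lsubspace_minus[OF A rest], of "inverse (c x)"] by metis
  qed
  have "rest = 0"
    using sum0 cx F(1) by (cases "x \<in> F") (simp_all add: sum.remove rest_def)
  then have "\<forall>s\<in>F - {x}. c s = 0"
    using lin_indepD[OF ind, of "F - {x}" c] F unfolding rest_def by blast
  then show "\<forall>s\<in>F. c s = 0"
    using cx by blast
qed

lemma inj_on_shear:
  fixes c :: "(nat \<Rightarrow> 'a::division_ring) \<Rightarrow> 'a"
  assumes ind: "lin_indep I" and v0: "v0 \<in> I"
  shows "inj_on (\<lambda>v. v - smult (c v) v0) (I - {v0})"
proof (rule inj_onI, rule ccontr)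
  fix v w assume v: "v \<in> I - {v0}" and w: "w \<in> I - {v0}" and "v \<noteq> w"
    and gvw: "v - smult (c v) v0 = w - smult (c w) v0"
  have "v \<noteq> v0" "w \<noteq> v0"
    using v w by auto
  define a where "a u = (if u = v then 1 else if u = w then -1 else c w - c v)" for u
  have "(\<Sum>s\<in>{v, w, v0}. smult (a s) s) = (v - smult (c v) v0) - (w - smult (c w) v0)"
    using \<open>v \<noteq> v0\<close> \<open>w \<noteq> v0\<close> \<open>v \<noteq> w\<close> unfolding a_def
    by (simp add: smult_diff_left smult_minus_left algebra_simps)
  then have "a v = 0"
    using gvw v w v0 by (intro lin_indepD[OF ind, of "{v, w, v0}"]) auto
  then show False
    unfolding a_def by simp
qed

lemma lin_indep_shear:
  fixes c :: "(nat \<Rightarrow> 'a::division_ring) \<Rightarrow> 'a"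
  assumes ind: "lin_indep I" and v0: "v0 \<in> I"
  shows "lin_indep ((\<lambda>v. v - smult (c v) v0) ` (I - {v0}))"
  unfolding lin_indep_def
proof (intro allI impI, elim conjE)
  define g where "g v = v - smult (c v) v0" for v
  fix F a assume "finite F" and FJ: "F \<subseteq> g ` (I - {v0})" and sum0: "(\<Sum>s\<in>F. smult (a s) s) = 0"
  define F' where "F' = {v \<in> I - {v0}. g v \<in> F}"
  have F': "F = g ` F'" "inj_on g F'" "v0 \<notin> F'" "F' \<subseteq> I"
    using FJ inj_on_subset[OF inj_on_shear[OF ind v0], of F'] unfolding F'_def g_def by auto
  then have "finite F'"
    using \<open>finite F\<close> finite_imageD by blast
  define a' where "a' u = (if u = v0 then - (\<Sum>v\<in>F'. a (g v) * c v) else a (g u))" for u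
  have "0 = (\<Sum>v\<in>F'. smult (a (g v)) (g v))"
    using sum0 F'(1,2) by (simp add: sum.reindex)
  also have "\<dots> = (\<Sum>v\<in>F'. smult (a (g v)) v) - smult (\<Sum>v\<in>F'. a (g v) * c v) v0"
    unfolding g_def by (simp add: smult_diff_right sum_subtractf smult_sum_left)
  also have "\<dots> = (\<Sum>v\<in>insert v0 F'. smult (a' v) v)"
  proof -
    have "(\<Sum>v\<in>F'. smult (a' v) v) = (\<Sum>v\<in>F'. smult (a (g v)) v)"
      using F'(3) unfolding a'_def by (intro sum.cong) auto
    then show ?thesis
      using \<open>finite F'\<close> F'(3) by (simp add: a'_def smult_minus_left)
  qed
  finally have "(\<Sum>v\<in>insert v0 F'. smult (a' v) v) = 0" by simp
  then have "a' v = 0" if "v \<in> F'" for v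
    using lin_indepD[OF ind] \<open>finite F'\<close> F'(4) v0 that by blast
  then have "a (g v) = 0" if "v \<in> F'" for v
    using that F'(3) unfolding a'_def by (metis (full_types))
  then show "\<forall>s\<in>F. a s = 0"
    using F'(1) by blast
qed

definition indep_bound :: "(nat \<Rightarrow> 'a::division_ring) set \<Rightarrow> nat \<Rightarrow> bool" where
  "indep_bound A d \<longleftrightarrow> (\<forall>I. finite I \<and> I \<subseteq> A \<and> lin_indep I \<longrightarrow> card I \<le> d)"

lemma indep_bound_subset: "indep_bound B d \<Longrightarrow> A \<subseteq> B \<Longrightarrow> indep_bound A d"
  unfolding indep_bound_def by blast

lemma lsum_span1_coeffs:
  assumes "I \<subseteq> lsum A (span1 x)"
  obtains t where "\<And>v. v \<in> I \<Longrightarrow> v - smult (t v) x \<in> A"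
proof -
  have "\<exists>t. v - smult t x \<in> A" if v: "v \<in> I" for v
  proof -
    obtain a t where "v = a + smult t x" "a \<in> A"
      using assms v unfolding span1_def by (blast elim: lsumE)
    then have "v - smult t x \<in> A"
      by simp
    then show ?thesis ..
  qed
  then have "\<exists>t. \<forall>v\<in>I. v - smult (t v) x \<in> A"
    by (intro bchoice) blast
  then show ?thesis
    using that by blast
qed

text \<open>Shearing I along a member v0 outside A moves the other members into A.\<close>
lemma indep_bound_lsum_span1:
  assumes A: "lsubspace n A" and bound: "indep_bound A d"
  shows "indep_bound (lsum A (span1 x)) (Suc d)"
  unfolding indep_bound_def
proof (intro allI impI, elim conjE)
  fix I assume fin: "finite I" and I: "I \<subseteq> lsum A (span1 x)" and ind: "lin_indep I"
  show "card I \<le> Suc d"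
  proof (cases "I \<subseteq> A")
    case True
    then show ?thesis
      using bound fin ind unfolding indep_bound_def by (simp add: le_SucI)
  next
    case False
    then obtain v0 where v0: "v0 \<in> I" "v0 \<notin> A" by blast
    obtain t where t: "\<And>v. v \<in> I \<Longrightarrow> v - smult (t v) x \<in> A"
      using lsum_span1_coeffs[OF I] by blast
    have "t v0 \<noteq> 0"
      using t[OF v0(1)] v0(2) by (metis diff_zero smult_zero)
    define c where "c v = t v * inverse (t v0)" for v
    define g where "g v = v - smult (c v) v0" for v
    have "c v * t v0 = t v" for v
      using \<open>t v0 \<noteq> 0\<close> unfolding c_def by (simp add: mult.assoc)
    then have "g v = (v - smult (t v) x) - smult (c v) (v0 - smult (t v0) x)" for v
      unfolding g_def by (simp add: smult_diff_right)
    then have "g v \<in> A" if "v \<in> I" for v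
      using lsubspace_diff[OF A t[OF that] lsubspace_smult[OF A t[OF v0(1)]]] by metis
    then have "g ` (I - {v0}) \<subseteq> A"
      by blast
    then have "card (g ` (I - {v0})) \<le> d"
      using bound fin lin_indep_shear[OF ind v0(1), of c] unfolding indep_bound_def g_def
      by (meson finite_Diff finite_imageI)
    then show ?thesis
      using card_image[OF inj_on_shear[OF ind v0(1), of c]] fin v0(1) unfolding g_def
      by (simp add: card_Diff_singleton)
  qed
qed

lemma indep_bound_vecs: "indep_bound (vecs n :: (nat \<Rightarrow> 'a::division_ring) set) n"
proof (induction n)
  case 0
  have "I = {}" if "lin_indep I" "I \<subseteq> vecs 0" for I :: "(nat \<Rightarrow> 'a) set"
  proof -
    have "I \<subseteq> {0}" using that(2) by (auto simp: vecs_def fun_eq_iff)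
    moreover have "0 \<notin> I"
      using lin_indepD[OF that(1), of "{0}" "\<lambda>_. 1"] by auto
    ultimately show ?thesis by blast
  qed
  then show ?case
    unfolding indep_bound_def by auto
next
  case (Suc n)
  define e where "e = (\<lambda>i. if i = n then 1 else 0 :: 'a)"
  have "vecs (Suc n) \<subseteq> lsum (vecs n) (span1 e)"
  proof
    fix v :: "nat \<Rightarrow> 'a" assume v: "v \<in> vecs (Suc n)"
    define w where "w = (\<lambda>i. if i = n then 0 else v i)"
    have "w + smult (v n) e = v" "w \<in> vecs n"
      using v by (auto simp: fun_eq_iff w_def e_def vecs_def)
    moreover have "smult (v n) e \<in> span1 e"
      unfolding span1_def by blast
    ultimately show "v \<in> lsum (vecs n) (span1 e)"
      using lsumI[of w "vecs n" "smult (v n) e" "span1 e"] by simp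
  qed
  then show ?case
    using indep_bound_subset[OF indep_bound_lsum_span1[OF lsubspace_vecs_le[of n n] Suc.IH]] by blast
qed

lemma finite_indep_cards:
  assumes "A \<subseteq> vecs n"
  shows "finite (card ` {B. finite B \<and> B \<subseteq> A \<and> lin_indep B})"
proof (rule finite_subset)
  show "card ` {B. finite B \<and> B \<subseteq> A \<and> lin_indep B} \<subseteq> {..n}"
    using indep_bound_subset[OF indep_bound_vecs assms] unfolding indep_bound_def by auto
qed simp

lemma ldim_ge_card:
  assumes "A \<subseteq> vecs n" "finite I" "I \<subseteq> A" "lin_indep I"
  shows "card I \<le> ldim A"
proof -
  have "card I \<in> card ` {B. finite B \<and> B \<subseteq> A \<and> lin_indep B}"
    using assms(2-4) by blast
  then show ?thesis
    unfolding ldim_def by (rule Max_ge[OF finite_indep_cards[OF assms(1)]])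
qed

lemma ldim_attained:
  assumes "A \<subseteq> vecs n"
  obtains I where "finite I" "I \<subseteq> A" "lin_indep I" "card I = ldim A"
proof -
  have "{} \<in> {B. finite B \<and> B \<subseteq> A \<and> lin_indep B}"
    using lin_indep_empty by blast
  then have "ldim A \<in> card ` {B. finite B \<and> B \<subseteq> A \<and> lin_indep B}"
    unfolding ldim_def by (intro Max_in[OF finite_indep_cards[OF assms]]) blast
  then obtain I where "I \<in> {B. finite B \<and> B \<subseteq> A \<and> lin_indep B}" "card I = ldim A"
    by (elim imageE) simp
  then show ?thesis
    using that by blast
qed

lemma ldim_le_bound:
  assumes "A \<subseteq> vecs n" "indep_bound A d"
  shows "ldim A \<le> d"
proof -
  obtain I where "finite I" "I \<subseteq> A" "lin_indep I" "card I = ldim A"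
    using ldim_attained[OF assms(1)] .
  then show ?thesis
    using assms(2) unfolding indep_bound_def by metis
qed

lemma indep_bound_ldim: "A \<subseteq> vecs n \<Longrightarrow> indep_bound A (ldim A)"
  unfolding indep_bound_def using ldim_ge_card by blast

lemma ldim_mono: "lsubspace n B \<Longrightarrow> A \<subseteq> B \<Longrightarrow> ldim A \<le> ldim B"
  using ldim_le_bound[of A n "ldim B"] indep_bound_subset[OF indep_bound_ldim[OF lsubspace_vecs]]
    lsubspace_vecs[of n B] by blast

lemma ldim_psubset:
  assumes A: "lsubspace n A" and B: "lsubspace n B" and "A \<subset> B"
  shows "ldim A < ldim B"
proof -
  obtain I where I: "finite I" "I \<subseteq> A" "lin_indep I" "card I = ldim A"
    using ldim_attained[OF lsubspace_vecs[OF A]] .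
  obtain x where x: "x \<in> B" "x \<notin> A"
    using \<open>A \<subset> B\<close> by blast
  have "card (insert x I) \<le> ldim B"
    using lin_indep_insert[OF A I(2,3) x(2)] I(1,2) x(1) \<open>A \<subset> B\<close>
    by (intro ldim_ge_card[OF lsubspace_vecs[OF B]]) auto
  moreover have "x \<notin> I"
    using I(2) x(2) by blast
  then have "card (insert x I) = Suc (ldim A)"
    using I(1,4) by simp
  ultimately show ?thesis by simp
qed

lemma lsubspace_eq_if_ldim_le:
  "lsubspace n A \<Longrightarrow> lsubspace n B \<Longrightarrow> A \<subseteq> B \<Longrightarrow> ldim B \<le> ldim A \<Longrightarrow> A = B"
  using ldim_psubset[of n A B] by (meson leD psubsetI)

lemma ldim_lsum_span1_le:
  assumes A: "lsubspace n A" and x: "x \<in> vecs n"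
  shows "ldim (lsum A (span1 x)) \<le> Suc (ldim A)"
  using ldim_le_bound[OF lsubspace_vecs[OF lsubspace_lsum[OF A lsubspace_span1[OF x]]]
      indep_bound_lsum_span1[OF A indep_bound_ldim[OF lsubspace_vecs[OF A]], of x]] .

lemma ldim_lsum_span1:
  assumes A: "lsubspace n A" and x: "x \<in> vecs n" "x \<notin> A"
  shows "ldim (lsum A (span1 x)) = Suc (ldim A)"
proof -
  have "A \<subset> lsum A (span1 x)"
    using lsum_upper1[OF lsubspace_span1[OF x(1)]] lsum_upper2[OF A] span1_self x(2) by blast
  then show ?thesis
    using ldim_psubset[OF A lsubspace_lsum[OF A lsubspace_span1[OF x(1)]]] ldim_lsum_span1_le[OF A x(1)]
    by simp
qed

lemma ldim_vecs: "ldim (vecs n :: (nat \<Rightarrow> 'a::division_ring) set) = n"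
proof -
  have "j \<le> ldim (vecs j :: (nat \<Rightarrow> 'a) set)" if "j \<le> n" for j
    using that
  proof (induction j)
    case (Suc j)
    have "(\<lambda>i. if i = j then 1 else 0 :: 'a) \<in> vecs (Suc j) - vecs j"
      by (auto simp: vecs_def)
    moreover have "vecs j \<subseteq> (vecs (Suc j) :: (nat \<Rightarrow> 'a) set)"
      by (auto simp: vecs_def)
    ultimately have "vecs j \<subset> (vecs (Suc j) :: (nat \<Rightarrow> 'a) set)"
      by blast
    then have "ldim (vecs j :: (nat \<Rightarrow> 'a) set) < ldim (vecs (Suc j) :: (nat \<Rightarrow> 'a) set)"
      using Suc.prems by (intro ldim_psubset[OF lsubspace_vecs_le[of j n] lsubspace_vecs_le[of "Suc j" n]]) simp_all
    then show ?case
      using Suc by simp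
  qed simp
  from this[of n] show ?thesis
    using ldim_le_bound[OF subset_refl indep_bound_vecs[where 'a = 'a], of n] by simp
qed

lemma ldim_Int_less:
  assumes a: "lsubspace n a" and b: "lsubspace n b" and "ldim a = ldim b" "a \<noteq> b"
  shows "ldim (a \<inter> b) < ldim a"
proof -
  have "\<not> a \<subseteq> b"
    using lsubspace_eq_if_ldim_le[OF a b] assms(3,4) by auto
  then show ?thesis
    by (intro ldim_psubset[OF lsubspace_Int[OF a b] a]) blast
qed

lemma ldim_lsum_greater:
  assumes a: "lsubspace n a" and b: "lsubspace n b" and "ldim a = ldim b" "a \<noteq> b"
  shows "ldim a < ldim (lsum a b)"
proof -
  have "\<not> b \<subseteq> a"
    using lsubspace_eq_if_ldim_le[OF b a] assms(3,4) by auto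
  then show ?thesis
    using lsum_upper1[OF b, of a] lsum_upper2[OF a, of b]
    by (intro ldim_psubset[OF a lsubspace_lsum[OF a b]]) blast
qed

lemma Int_eq_if_ldim:
  assumes c: "lsubspace n c" and d: "lsubspace n d" and H: "lsubspace n H"
    and "ldim c = Suc h" "ldim d = Suc h" "c \<noteq> d" "H \<subseteq> c" "H \<subseteq> d" "ldim H = h"
  shows "c \<inter> d = H"
  using ldim_Int_less[OF c d] lsubspace_eq_if_ldim_le[OF H lsubspace_Int[OF c d]] assms(4-9) by simp

lemma lsum_eq_if_ldim:
  assumes c: "lsubspace n c" and d: "lsubspace n d" and B: "lsubspace n B"
    and "ldim c = h" "ldim d = h" "c \<noteq> d" "c \<subseteq> B" "d \<subseteq> B" "ldim B = Suc h"
  shows "lsum c d = B"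
  using ldim_lsum_greater[OF c d] assms(4-9)
  by (intro lsubspace_eq_if_ldim_le[OF lsubspace_lsum[OF c d] B] lsum_least[OF B]) auto

lemma ldim_lsum_adjacent:
  assumes a: "lsubspace n a" and b: "lsubspace n b"
    and "ldim a = d" "ldim b = d" "Suc (ldim (a \<inter> b)) = d"
  shows "ldim (lsum a b) = Suc d"
proof -
  have "\<not> b \<subseteq> a"
    using assms(4,5) Int_absorb1[of b a] by auto
  then obtain y where y: "y \<in> b" "y \<notin> a" by blast
  have yv: "y \<in> vecs n"
    using lsubspace_vecs[OF b] y(1) by blast
  have ab: "lsubspace n (a \<inter> b)"
    using lsubspace_Int[OF a b] .
  have "lsum (a \<inter> b) (span1 y) = b"
    using y assms(4,5) ldim_lsum_span1[OF ab yv]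
    by (intro lsubspace_eq_if_ldim_le[OF lsubspace_lsum[OF ab lsubspace_span1[OF yv]] b]
        lsum_least[OF b] span1_least[OF b]) auto
  then have "b \<subseteq> lsum a (span1 y)"
    using lsum_mono[of "a \<inter> b" a "span1 y" "span1 y"] by blast
  then have "lsum a b \<subseteq> lsum a (span1 y)"
    by (intro lsum_least[OF lsubspace_lsum[OF a lsubspace_span1[OF yv]]
          lsum_upper1[OF lsubspace_span1[OF yv]]])
  moreover have "lsum a (span1 y) \<subseteq> lsum a b"
    by (intro lsum_mono order_refl span1_least[OF b y(1)])
  ultimately have "lsum a b = lsum a (span1 y)"
    by (rule subset_antisym)
  then show ?thesis
    using ldim_lsum_span1[OF a yv y(2)] assms(3) by simp
qed

lemma ldim_Int_in_Suc:
  assumes a: "lsubspace n a" and b: "lsubspace n b" and C: "lsubspace n C"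
    and "ldim a = d" "ldim b = d" "a \<noteq> b" "a \<subseteq> C" "b \<subseteq> C" "ldim C = Suc d"
  shows "Suc (ldim (a \<inter> b)) = d"
proof -
  have "\<not> b \<subseteq> a"
    using lsubspace_eq_if_ldim_le[OF b a] assms(4-6) by auto
  then obtain y where y: "y \<in> b" "y \<notin> a" by blast
  have yv: "y \<in> vecs n"
    using lsubspace_vecs[OF b] y(1) by blast
  have ab: "lsubspace n (a \<inter> b)"
    using lsubspace_Int[OF a b] .
  have "lsum a (span1 y) = C"
    using y assms(4,7-9) ldim_lsum_span1[OF a yv]
    by (intro lsubspace_eq_if_ldim_le[OF lsubspace_lsum[OF a lsubspace_span1[OF yv]] C]
        lsum_least[OF C] span1_least[OF C]) auto
  have "b \<subseteq> lsum (a \<inter> b) (span1 y)"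
  proof
    fix z assume z: "z \<in> b"
    then have "z \<in> lsum a (span1 y)"
      using \<open>lsum a (span1 y) = C\<close> assms(8) by blast
    then obtain e t where "z = e + smult t y" "e \<in> a"
      unfolding span1_def by (blast elim: lsumE)
    moreover have "z - smult t y \<in> b"
      using lsubspace_diff[OF b z lsubspace_smult[OF b y(1)]] .
    ultimately show "z \<in> lsum (a \<inter> b) (span1 y)"
      using lsumI[of e "a \<inter> b" "smult t y" "span1 y"] unfolding span1_def by auto
  qed
  then have "d \<le> Suc (ldim (a \<inter> b))"
    using ldim_mono[OF lsubspace_lsum[OF ab lsubspace_span1[OF yv]]] ldim_lsum_span1_le[OF ab yv] assms(5)
    by (meson order_trans)
  then show ?thesis
    using ldim_Int_less[OF a b] assms(4-6) by simp
qed

lemma zero_space_eq_vecs_0: "{0} = vecs 0"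
  by (auto simp: vecs_def fun_eq_iff)

lemma exists_lsubspace_ldim:
  fixes W :: "(nat \<Rightarrow> 'a::division_ring) set"
  assumes W: "lsubspace n W" and "j \<le> ldim W"
  shows "\<exists>A. lsubspace n A \<and> A \<subseteq> W \<and> ldim A = j"
  using assms(2)
proof (induction j)
  case 0
  have "ldim ({0} :: (nat \<Rightarrow> 'a) set) = 0"
    unfolding zero_space_eq_vecs_0 by (rule ldim_vecs)
  then show ?case
    using lsubspace_zero_space[of n] lsubspace_0[OF W] by (intro exI[of _ "{0}"]) simp
next
  case (Suc j)
  then obtain A where A: "lsubspace n A" "A \<subseteq> W" "ldim A = j" by auto
  have "A \<noteq> W"
    using A(3) Suc.prems by auto
  then obtain x where x: "x \<in> W" "x \<notin> A"
    using A(2) by blast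
  have xv: "x \<in> vecs n"
    using lsubspace_vecs[OF W] x(1) by blast
  show ?case
    using lsubspace_lsum[OF A(1) lsubspace_span1[OF xv]] lsum_least[OF W A(2) span1_least[OF W x(1)]]
      ldim_lsum_span1[OF A(1) xv x(2)] A(3) by blast
qed

lemma Int_lsum_span1:
  assumes U: "lsubspace n U" and W: "lsubspace n W" and x: "x \<notin> lsum U W"
  shows "lsum U (span1 x) \<inter> W = U \<inter> W"
proof
  have "0 \<in> span1 x"
    unfolding span1_def by (metis rangeI smult_zero)
  then show "U \<inter> W \<subseteq> lsum U (span1 x) \<inter> W"
    using lsumI[of _ U 0 "span1 x"] by auto
  show "lsum U (span1 x) \<inter> W \<subseteq> U \<inter> W"
  proof
    fix z assume z: "z \<in> lsum U (span1 x) \<inter> W"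
    then obtain u t where zu: "z = u + smult t x" "u \<in> U"
      unfolding span1_def by (blast elim: lsumE)
    have "t = 0"
    proof (rule ccontr)
      assume "t \<noteq> 0"
      then have "smult (inverse t) (- u) + smult (inverse t) z = x"
        using zu(1) by (simp add: smult_add_right[symmetric] smult_diff_right)
      moreover have "smult (inverse t) (- u) \<in> U" "smult (inverse t) z \<in> W"
        using lsubspace_smult[OF U lsubspace_minus[OF U zu(2)]] lsubspace_smult[OF W] z by auto
      ultimately show False
        using x lsumI by metis
    qed
    then show "z \<in> U \<inter> W"
      using zu z by simp
  qed
qed

lemma exists_lsubspace_Int_eq:
  fixes W :: "(nat \<Rightarrow> 'a::division_ring) set"
  assumes W: "lsubspace n W" and U0: "lsubspace n U0" "U0 \<subseteq> W" and "ldim W + i \<le> n"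
  shows "\<exists>U. lsubspace n U \<and> ldim U = ldim U0 + i \<and> U \<inter> W = U0"
proof -
  have "\<exists>U. lsubspace n U \<and> ldim U = ldim U0 + i \<and> U \<inter> W = U0 \<and> ldim (lsum U W) \<le> ldim W + i"
    using assms(4)
  proof (induction i)
    case 0
    have "lsum U0 W = W"
      using lsum_least[OF W U0(2) order_refl] lsum_upper2[OF U0(1), of W] by blast
    then show ?case
      using U0 by (intro exI[of _ U0]) auto
  next
    case (Suc i)
    then obtain U where U: "lsubspace n U" "ldim U = ldim U0 + i" "U \<inter> W = U0"
      "ldim (lsum U W) \<le> ldim W + i"
      by auto
    have S: "lsubspace n (lsum U W)"
      using lsubspace_lsum[OF U(1) W] .
    have "lsum U W \<noteq> vecs n"
      using U(4) Suc.prems ldim_vecs[of n, where 'a = 'a] by auto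
    then obtain x where x: "x \<in> vecs n" "x \<notin> lsum U W"
      using lsubspace_vecs[OF S] by blast
    have "x \<notin> U"
      using x(2) lsum_upper1[OF W, of U] by blast
    have T: "lsubspace n (lsum (lsum U W) (span1 x))"
      using lsubspace_lsum[OF S lsubspace_span1[OF x(1)]] .
    have "lsum (lsum U (span1 x)) W \<subseteq> lsum (lsum U W) (span1 x)"
      using lsum_upper2[OF U(1), of W] lsum_upper1[OF lsubspace_span1[OF x(1)], of "lsum U W"]
      by (intro lsum_least[OF T] lsum_mono[OF lsum_upper1[OF W] order_refl]) auto
    then have "ldim (lsum (lsum U (span1 x)) W) \<le> Suc (ldim (lsum U W))"
      using ldim_mono[OF T] ldim_lsum_span1_le[OF S x(1)] by (meson order_trans)
    then show ?case
      using lsubspace_lsum[OF U(1) lsubspace_span1[OF x(1)]] ldim_lsum_span1[OF U(1) x(1) \<open>x \<notin> U\<close>]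
        Int_lsum_span1[OF U(1) W x(2)] U(2-4)
      by (intro exI[of _ "lsum U (span1 x)"]) auto
  qed
  then show ?thesis
    by blast
qed

lemma spoints_nonempty:
  fixes W :: "(nat \<Rightarrow> 'a::division_ring) set"
  assumes W: "lsubspace n W" and "m \<le> k" "m \<le> ldim W" "k + ldim W \<le> n + m"
  shows "spoints n k W m \<noteq> {}"
proof -
  obtain U0 where U0: "lsubspace n U0" "U0 \<subseteq> W" "ldim U0 = m"
    using exists_lsubspace_ldim[OF W assms(3)] by blast
  have "ldim W + (k - m) \<le> n"
    using assms(2,4) by linarith
  then obtain U where "lsubspace n U" "ldim U = m + (k - m)" "U \<inter> W = U0"
    using exists_lsubspace_Int_eq[OF W U0(1,2)] U0(3) by blast
  then have "U \<in> spoints n k W m"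
    unfolding spoints_def Sub_def using U0(3) assms(2) by simp
  then show ?thesis
    by blast
qed

section \<open>Families of pairwise adjacent subspaces\<close>

lemma Int_subset_or_subset_lsum_if_meets:
  assumes a: "lsubspace n a" and b: "lsubspace n b" and c: "lsubspace n c"
    and "ldim c = Suc h" "ldim (c \<inter> a) = h" "ldim (c \<inter> b) = h" "ldim (a \<inter> b) = h"
  shows "a \<inter> b \<subseteq> c \<or> c \<subseteq> lsum a b"
proof (cases "c \<inter> a = c \<inter> b")
  case True
  then have "c \<inter> a \<subseteq> a \<inter> b"
    by blast
  then have "c \<inter> a = a \<inter> b"
    using lsubspace_eq_if_ldim_le[OF lsubspace_Int[OF c a] lsubspace_Int[OF a b]] assms(5,7) by simp
  then show ?thesis
    by blast
next
  case False
  then have "lsum (c \<inter> a) (c \<inter> b) = c"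
    using lsum_eq_if_ldim[OF lsubspace_Int[OF c a] lsubspace_Int[OF c b] c] assms(4-6) by auto
  moreover have "lsum (c \<inter> a) (c \<inter> b) \<subseteq> lsum a b"
    by (rule lsum_mono) auto
  ultimately show ?thesis
    by simp
qed

lemma Int_subset_or_subset_lsum_if_joins:
  assumes a: "lsubspace n a" and b: "lsubspace n b" and c: "lsubspace n c"
    and "ldim c = h" "ldim (lsum c a) = Suc h" "ldim (lsum c b) = Suc h" "ldim (lsum a b) = Suc h"
  shows "a \<inter> b \<subseteq> c \<or> c \<subseteq> lsum a b"
proof (cases "lsum c a = lsum c b")
  case True
  then have "lsum a b \<subseteq> lsum c a"
    using lsum_upper2[OF c, of a] lsum_upper2[OF c, of b]
    by (intro lsum_least[OF lsubspace_lsum[OF c a]]) auto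
  then have "lsum a b = lsum c a"
    using lsubspace_eq_if_ldim_le[OF lsubspace_lsum[OF a b] lsubspace_lsum[OF c a]] assms(5,7) by simp
  then show ?thesis
    using lsum_upper1[OF a, of c] by blast
next
  case False
  then have "lsum c a \<inter> lsum c b = c"
    using Int_eq_if_ldim[OF lsubspace_lsum[OF c a] lsubspace_lsum[OF c b] c] assms(4-6)
      lsum_upper1[OF a, of c] lsum_upper1[OF b, of c] by auto
  moreover have "a \<inter> b \<subseteq> lsum c a \<inter> lsum c b"
    using lsum_upper2[OF c, of a] lsum_upper2[OF c, of b] by blast
  ultimately show ?thesis
    by blast
qed

text \<open>Each B meets B1 and B2 in hyperplanes; if these differ they span B, otherwise B contains
  B1 \<inter> B2 and is spanned by it together with B \<inter> B3.\<close>
lemma adjacent_family_subset_lsum: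
  assumes fam: "\<And>B. B \<in> \<B> \<Longrightarrow> lsubspace n B \<and> ldim B = Suc d"
    and adj: "\<And>B B'. B \<in> \<B> \<Longrightarrow> B' \<in> \<B> \<Longrightarrow> B \<noteq> B' \<Longrightarrow> ldim (B \<inter> B') = d"
    and B123: "B1 \<in> \<B>" "B2 \<in> \<B>" "B3 \<in> \<B>" "B1 \<noteq> B2" "\<not> B1 \<inter> B2 \<subseteq> B3"
    and B: "B \<in> \<B>"
  shows "B \<subseteq> lsum B1 B2"
proof -
  note dims = fam[OF B123(1)] fam[OF B123(2)]
  have "ldim (B1 \<inter> B2) = d"
    using adj B123 by blast
  have core_or_in_Z: "B1 \<inter> B2 \<subseteq> B' \<or> B' \<subseteq> lsum B1 B2" if B': "B' \<in> \<B>" for B'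
  proof (cases "B' = B1 \<or> B' = B2")
    case False
    then show ?thesis
      using Int_subset_or_subset_lsum_if_meets[of n B1 B2 B' d] dims fam[OF B']
        adj[OF B' B123(1)] adj[OF B' B123(2)] \<open>ldim (B1 \<inter> B2) = d\<close> by auto
  qed blast
  have "B3 \<subseteq> lsum B1 B2"
    using core_or_in_Z[OF B123(3)] B123(5) by blast
  show ?thesis
  proof (cases "B = B3")
    case False
    show ?thesis
    proof (rule disjE[OF core_or_in_Z[OF B]])
      assume core: "B1 \<inter> B2 \<subseteq> B"
      note Bsub = fam[OF B] and B3sub = fam[OF B123(3)]
      have q: "lsubspace n (B \<inter> B3)" "ldim (B \<inter> B3) = d"
        using lsubspace_Int Bsub B3sub adj[OF B B123(3) False] by auto
      have "B \<inter> B3 \<noteq> B1 \<inter> B2"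
        using B123(5) by blast
      then have "lsum (B \<inter> B3) (B1 \<inter> B2) = B"
        using lsum_eq_if_ldim[OF q(1) lsubspace_Int conjunct1[OF Bsub]] q dims Bsub core
          \<open>ldim (B1 \<inter> B2) = d\<close> by auto
      moreover have "lsum (B \<inter> B3) (B1 \<inter> B2) \<subseteq> lsum B1 B2"
        using \<open>B3 \<subseteq> lsum B1 B2\<close> lsum_upper1[of n B2 B1] dims
        by (intro lsum_least[OF lsubspace_lsum]) auto
      ultimately show ?thesis
        by simp
    qed
  qed (use \<open>B3 \<subseteq> lsum B1 B2\<close> in simp)
qed

lemma adjacent_family_Int_subset:
  assumes fam: "\<And>H. H \<in> \<H> \<Longrightarrow> lsubspace n H \<and> ldim H = d"
    and adj: "\<And>H H'. H \<in> \<H> \<Longrightarrow> H' \<in> \<H> \<Longrightarrow> H \<noteq> H' \<Longrightarrow> ldim (lsum H H') = Suc d"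
    and H123: "H1 \<in> \<H>" "H2 \<in> \<H>" "H3 \<in> \<H>" "H1 \<noteq> H2" "\<not> H3 \<subseteq> lsum H1 H2"
    and H: "H \<in> \<H>"
  shows "H1 \<inter> H2 \<subseteq> H"
proof -
  note dims = fam[OF H123(1)] fam[OF H123(2)]
  have V: "lsubspace n (lsum H1 H2)" "ldim (lsum H1 H2) = Suc d"
    using lsubspace_lsum dims adj H123 by blast+
  have core_or_in_V: "H1 \<inter> H2 \<subseteq> H' \<or> H' \<subseteq> lsum H1 H2" if H': "H' \<in> \<H>" for H'
  proof (cases "H' = H1 \<or> H' = H2")
    case False
    then show ?thesis
      using Int_subset_or_subset_lsum_if_joins[of n H1 H2 H' d] dims fam[OF H']
        adj[OF H' H123(1)] adj[OF H' H123(2)] V(2) by auto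
  qed blast
  have "H1 \<inter> H2 \<subseteq> H3"
    using core_or_in_V[OF H123(3)] H123(5) by blast
  show ?thesis
  proof (cases "H = H3")
    case False
    show ?thesis
    proof (rule disjE[OF core_or_in_V[OF H]])
      assume in_V: "H \<subseteq> lsum H1 H2"
      note Hsub = fam[OF H] and H3sub = fam[OF H123(3)]
      have q: "lsubspace n (lsum H H3)" "ldim (lsum H H3) = Suc d"
        using lsubspace_lsum Hsub H3sub adj[OF H H123(3) False] by auto
      have "lsum H H3 \<noteq> lsum H1 H2"
        using H123(5) lsum_upper2[of n H H3] Hsub by blast
      then have "lsum H H3 \<inter> lsum H1 H2 = H"
        using Int_eq_if_ldim[OF q(1) V(1) conjunct1[OF Hsub]] q V Hsub in_V lsum_upper1[of n H3 H] H3sub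
        by auto
      moreover have "H1 \<inter> H2 \<subseteq> lsum H H3 \<inter> lsum H1 H2"
        using \<open>H1 \<inter> H2 \<subseteq> H3\<close> lsum_upper2[of n H H3] lsum_upper1[of n H2 H1] Hsub dims by blast
      ultimately show ?thesis
        by simp
    qed
  qed (use \<open>H1 \<inter> H2 \<subseteq> H3\<close> in simp)
qed

section \<open>Lines, adjacency and strong subspaces\<close>

lemma Sub_iff: "U \<in> Sub n j \<longleftrightarrow> lsubspace n U \<and> ldim U = j"
  by (simp add: Sub_def)

lemma pencil_iff: "U \<in> pencil n k H B \<longleftrightarrow> lsubspace n U \<and> ldim U = k \<and> H \<subseteq> U \<and> U \<subseteq> B"
  by (simp add: pencil_def Sub_def)

lemma spoints_iff: "U \<in> spoints n k W m \<longleftrightarrow> lsubspace n U \<and> ldim U = k \<and> ldim (U \<inter> W) = m"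
  by (simp add: spoints_def Sub_def)

lemma grass_plane_iff:
  "grass_plane n k P \<longleftrightarrow> (\<exists>Y Z. lsubspace n Y \<and> lsubspace n Z \<and> Y \<subseteq> Z \<and>
     ((ldim Y = k - 2 \<and> ldim Z = k + 1) \<or> (ldim Y = k - 1 \<and> ldim Z = k + 2)) \<and> P = pencil n k Y Z)"
  unfolding grass_plane_def pencil_def ..

lemma subset_grass_closure: "X \<subseteq> grass_closure n k X"
  unfolding grass_closure_def by blast

lemma grass_closure_mono: "X \<subseteq> Y \<Longrightarrow> grass_closure n k X \<subseteq> grass_closure n k Y"
  unfolding grass_closure_def by blast

context
  fixes n k :: nat and W :: "(nat \<Rightarrow> 'a::division_ring) set" and m :: nat
  assumes k_gt_1: "1 < k"
begin

abbreviation pts :: "(nat \<Rightarrow> 'a) set set" where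
  "pts \<equiv> spoints n k W m"

text \<open>line_pencil L H B: L is a line of the spine space with pencil_of L = p(H,B); H and B are the
  vertex and the top of L.\<close>
definition line_pencil :: "(nat \<Rightarrow> 'a) set set \<Rightarrow> (nat \<Rightarrow> 'a) set \<Rightarrow> (nat \<Rightarrow> 'a) set \<Rightarrow> bool" where
  "line_pencil L H B \<longleftrightarrow> H \<in> Sub n (k - 1) \<and> B \<in> Sub n (k + 1) \<and> H \<subseteq> B \<and>
     L = pencil n k H B \<inter> pts \<and> two_pts L"

lemma slines_iff_line_pencil: "L \<in> slines n k W m \<longleftrightarrow> (\<exists>H B. line_pencil L H B)"
  unfolding slines_def line_pencil_def is_pencil_def by blast

lemma pencil_meet_join:
  assumes "H \<in> Sub n (k - 1)" "B \<in> Sub n (k + 1)" "U \<in> pencil n k H B" "U' \<in> pencil n k H B" "U \<noteq> U'"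
  shows "U \<inter> U' = H" "lsum U U' = B"
  using Int_eq_if_ldim[of n U U' H "k - 1"] lsum_eq_if_ldim[of n U U' B k] assms k_gt_1
  by (auto simp: Sub_iff pencil_iff)

lemma line_pencil_points:
  assumes "line_pencil L H B" "U \<in> L"
  shows "U \<in> pts" "lsubspace n U" "ldim U = k" "H \<subseteq> U" "U \<subseteq> B"
  using assms unfolding line_pencil_def by (auto simp: pencil_iff)

lemma line_pencil_spaces:
  assumes "line_pencil L H B"
  shows "lsubspace n H" "ldim H = k - 1" "lsubspace n B" "ldim B = Suc k" "H \<subseteq> B"
  using assms unfolding line_pencil_def by (auto simp: Sub_iff)

lemma line_pencil_two_points:
  assumes "line_pencil L H B"
  obtains U U' where "U \<in> L" "U' \<in> L" "U \<noteq> U'"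
  using assms unfolding line_pencil_def two_pts_def by blast

lemma line_pencil_meet_join:
  assumes "line_pencil L H B" "U \<in> L" "U' \<in> L" "U \<noteq> U'"
  shows "U \<inter> U' = H" "lsum U U' = B"
  using pencil_meet_join[of H B U U'] assms unfolding line_pencil_def by auto

lemma line_pencil_unique:
  assumes "line_pencil L H B" "line_pencil L H' B'"
  shows "H' = H \<and> B' = B"
proof -
  obtain U U' where "U \<in> L" "U' \<in> L" "U \<noteq> U'"
    using assms(1) by (rule line_pencil_two_points)
  then show ?thesis
    using line_pencil_meet_join[OF assms(1)] line_pencil_meet_join[OF assms(2)] by metis
qed

lemma line_pencil_eq: "line_pencil L H B \<Longrightarrow> line_pencil L' H B \<Longrightarrow> L = L'"
  unfolding line_pencil_def by simp

lemma pencil_of_eq: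
  assumes L: "line_pencil L H B"
  shows "pencil_of n k L = pencil n k H B"
  unfolding pencil_of_def
proof (rule the_equality)
  show "is_pencil n k (pencil n k H B) \<and> L \<subseteq> pencil n k H B"
    using L unfolding line_pencil_def is_pencil_def by blast
next
  fix l assume "is_pencil n k l \<and> L \<subseteq> l"
  then obtain H' B' where l: "H' \<in> Sub n (k - 1)" "B' \<in> Sub n (k + 1)" "l = pencil n k H' B'" "L \<subseteq> l"
    unfolding is_pencil_def by blast
  obtain U U' where "U \<in> L" "U' \<in> L" "U \<noteq> U'"
    using L by (rule line_pencil_two_points)
  then show "l = pencil n k H B"
    using pencil_meet_join[OF l(1,2), of U U'] line_pencil_meet_join[OF L, of U U'] l(3,4) by auto
qed

definition adjacent :: "(nat \<Rightarrow> 'a) set \<Rightarrow> (nat \<Rightarrow> 'a) set \<Rightarrow> bool" where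
  "adjacent U U' \<longleftrightarrow> Suc (ldim (U \<inter> U')) = k"

lemma line_points_adjacent:
  assumes "line_pencil L H B" "U \<in> L" "U' \<in> L" "U \<noteq> U'"
  shows "adjacent U U'"
  using line_pencil_meet_join(1)[OF assms] line_pencil_spaces(2)[OF assms(1)] k_gt_1
  unfolding adjacent_def by simp

lemma collinear_iff_adjacent:
  assumes U: "U \<in> pts" and U': "U' \<in> pts" and "U \<noteq> U'"
  shows "(\<exists>L\<in>slines n k W m. U \<in> L \<and> U' \<in> L) \<longleftrightarrow> adjacent U U'"
proof
  assume "\<exists>L\<in>slines n k W m. U \<in> L \<and> U' \<in> L"
  then obtain L H B where "line_pencil L H B" "U \<in> L" "U' \<in> L"
    using slines_iff_line_pencil by blast
  then show "adjacent U U'"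
    using line_points_adjacent \<open>U \<noteq> U'\<close> by blast
next
  assume adj: "adjacent U U'"
  have u: "lsubspace n U" "ldim U = k" and u': "lsubspace n U'" "ldim U' = k"
    using U U' by (auto simp: spoints_iff)
  define L where "L = pencil n k (U \<inter> U') (lsum U U') \<inter> pts"
  have "U \<in> L" "U' \<in> L"
    using U U' u u' lsum_upper1[OF u'(1), of U] lsum_upper2[OF u(1), of U']
    unfolding L_def by (auto simp: pencil_iff)
  moreover have "line_pencil L (U \<inter> U') (lsum U U')"
    unfolding line_pencil_def two_pts_def
    using calculation \<open>U \<noteq> U'\<close> adj lsubspace_Int[OF u(1) u'(1)] lsubspace_lsum[OF u(1) u'(1)]
      ldim_lsum_adjacent[OF u(1) u'(1) u(2) u'(2)] lsum_upper1[OF u'(1), of U]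
    by (auto simp: Sub_iff L_def adjacent_def)
  ultimately show "\<exists>L\<in>slines n k W m. U \<in> L \<and> U' \<in> L"
    using slines_iff_line_pencil by blast
qed

lemma adjacent_if_star_or_top:
  assumes c: "lsubspace n c" "ldim c = k" and d: "lsubspace n d" "ldim d = k" and "c \<noteq> d"
    and H: "lsubspace n H" "ldim H = k - 1" "H \<subseteq> c" and B: "lsubspace n B" "ldim B = Suc k" "c \<subseteq> B"
    and "H \<subseteq> d \<or> d \<subseteq> B"
  shows "adjacent c d"
  using assms(12)
proof
  assume "H \<subseteq> d"
  then have "c \<inter> d = H"
    using Int_eq_if_ldim[OF c(1) d(1) H(1), of "k - 1"] assms(2,4,5) H(2,3) k_gt_1 by simp
  then show ?thesis
    using H(2) k_gt_1 by (simp add: adjacent_def)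
next
  assume "d \<subseteq> B"
  then show ?thesis
    using ldim_Int_in_Suc[OF c(1) d(1) B(1)] assms(2,4,5) B(2,3) by (simp add: adjacent_def)
qed

lemma adjacent_pair_star_or_top:
  assumes a: "lsubspace n a" and b: "lsubspace n b" and d: "lsubspace n d" "ldim d = k"
    and "adjacent a b" and "d = a \<or> adjacent d a" and "d = b \<or> adjacent d b"
  shows "a \<inter> b \<subseteq> d \<or> d \<subseteq> lsum a b"
proof (cases "d = a \<or> d = b")
  case False
  then show ?thesis
    using Int_subset_or_subset_lsum_if_meets[OF a b d(1), of "k - 1"] assms(4-7) k_gt_1
    unfolding adjacent_def by auto
qed blast

definition pairwise_adjacent :: "(nat \<Rightarrow> 'a) set set \<Rightarrow> bool" where
  "pairwise_adjacent X \<longleftrightarrow> X \<subseteq> pts \<and> pairwise adjacent X"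

lemma strong_subspace_pairwise_adjacent:
  assumes "strong_subspace n k W m X"
  shows "pairwise_adjacent X"
proof -
  have "X \<subseteq> pts"
    using assms unfolding strong_subspace_def spine_subspace_def by blast
  moreover have "adjacent U U'" if "U \<in> X" "U' \<in> X" "U \<noteq> U'" for U U'
    using assms collinear_iff_adjacent[of U U'] that calculation
    unfolding strong_subspace_def by blast
  ultimately show ?thesis
    unfolding pairwise_adjacent_def pairwise_def by blast
qed

lemma adjacent_sym: "adjacent U U' \<Longrightarrow> adjacent U' U"
  unfolding adjacent_def by (simp add: Int_commute)

text \<open>A point adjacent to two points of a line contains their meet or lies in their join, so it is
  adjacent to every point of the line.\<close>
lemma adjacent_to_line:
  assumes L: "line_pencil L H B" and ab: "a \<in> L" "b \<in> L" "a \<noteq> b"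
    and v: "lsubspace n v" "ldim v = k" "v = a \<or> adjacent v a" "v = b \<or> adjacent v b"
    and u: "u \<in> L" "u \<noteq> v"
  shows "adjacent u v"
proof -
  note pu = line_pencil_points[OF L u(1)]
  have "a \<inter> b \<subseteq> v \<or> v \<subseteq> lsum a b"
    using v(3,4) by (rule adjacent_pair_star_or_top[OF line_pencil_points(2)[OF L ab(1)]
        line_pencil_points(2)[OF L ab(2)] v(1,2) line_points_adjacent[OF L ab]])
  then have "H \<subseteq> v \<or> v \<subseteq> B"
    using line_pencil_meet_join[OF L ab] by simp
  then show ?thesis
    by (rule adjacent_if_star_or_top[OF pu(2,3) v(1,2) u(2) line_pencil_spaces(1,2)[OF L] pu(4)
        line_pencil_spaces(3,4)[OF L] pu(5)])
qed

lemma pairwise_adjacent_Un_line: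
  assumes X: "pairwise_adjacent X" and L: "line_pencil L H B" and "two_pts (L \<inter> X)"
  shows "pairwise_adjacent (X \<union> L)"
proof -
  obtain a b where ab: "a \<in> L" "a \<in> X" "b \<in> L" "b \<in> X" "a \<noteq> b"
    using assms(3) unfolding two_pts_def by blast
  have XP: "X \<subseteq> pts" and adjX: "pairwise adjacent X"
    using X unfolding pairwise_adjacent_def by auto
  have across: "adjacent u v" if u: "u \<in> L" and v: "v \<in> X" "v \<notin> L" for u v
  proof -
    have "lsubspace n v" "ldim v = k"
      using XP v(1) by (auto simp: spoints_iff)
    moreover have "v = a \<or> adjacent v a" "v = b \<or> adjacent v b"
      using adjX v(1) ab(2,4) unfolding pairwise_def by auto
    moreover have "u \<noteq> v"
      using u v by blast
    ultimately show ?thesis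
      using adjacent_to_line[OF L ab(1,3,5)] u by blast
  qed
  have "adjacent u v" if uv: "u \<in> X \<union> L" "v \<in> X \<union> L" and "u \<noteq> v" for u v
  proof -
    consider "u \<in> L" "v \<in> L" | "u \<in> X" "v \<in> X" | "u \<in> L" "v \<in> X" "v \<notin> L" | "v \<in> L" "u \<in> X" "u \<notin> L"
      using uv by auto
    then show ?thesis
      using line_points_adjacent[OF L] adjX across adjacent_sym \<open>u \<noteq> v\<close> unfolding pairwise_def
      by cases blast+
  qed
  then show ?thesis
    using XP line_pencil_points(1)[OF L] unfolding pairwise_adjacent_def pairwise_def by blast
qed

lemma max_strong_subspace_if_maximal:
  assumes X: "pairwise_adjacent X" and max: "\<And>Y. pairwise_adjacent Y \<Longrightarrow> X \<subseteq> Y \<Longrightarrow> Y = X"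
  shows "max_strong_subspace n k W m X"
proof -
  have XP: "X \<subseteq> pts" and adjX: "pairwise adjacent X"
    using X unfolding pairwise_adjacent_def by auto
  have "spine_subspace n k W m X"
    unfolding spine_subspace_def
  proof (intro conjI ballI impI XP)
    fix L assume "L \<in> slines n k W m" and meets: "two_pts (L \<inter> X)"
    then obtain H B where "line_pencil L H B"
      unfolding slines_iff_line_pencil by blast
    then have "X \<union> L = X"
      using max[OF pairwise_adjacent_Un_line[OF X _ meets]] by blast
    then show "L \<subseteq> X"
      by blast
  qed
  moreover have "\<exists>L\<in>slines n k W m. U \<in> L \<and> U' \<in> L" if "U \<in> X" "U' \<in> X" "U \<noteq> U'" for U U'
  proof -
    have "adjacent U U'"
      using adjX that unfolding pairwise_def by blast
    moreover have "U \<in> pts" "U' \<in> pts"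
      using XP that(1,2) by blast+
    ultimately show ?thesis
      using collinear_iff_adjacent that(3) by blast
  qed
  ultimately have "strong_subspace n k W m X"
    unfolding strong_subspace_def by blast
  then show ?thesis
    using max strong_subspace_pairwise_adjacent unfolding max_strong_subspace_def by blast
qed

lemma exists_maximal_pairwise_adjacent:
  assumes "pairwise_adjacent C0"
  obtains X where "C0 \<subseteq> X" "pairwise_adjacent X" "\<And>Y. pairwise_adjacent Y \<Longrightarrow> X \<subseteq> Y \<Longrightarrow> Y = X"
proof -
  let ?A = "{X. C0 \<subseteq> X \<and> pairwise_adjacent X}"
  have "\<exists>M\<in>?A. \<forall>X\<in>?A. M \<subseteq> X \<longrightarrow> X = M"
  proof (rule subset_Zorn_nonempty)
    show "?A \<noteq> {}"
      using assms by blast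
  next
    fix \<C> assume "\<C> \<noteq> {}" and chain: "subset.chain ?A \<C>"
    have sub: "\<C> \<subseteq> ?A"
      using chain by (simp add: subset_chain_def)
    have "chain\<^sub>\<subseteq> \<C>"
      using chain by (simp add: subset_chain_def chain_subset_def)
    moreover have "pairwise adjacent S" if "S \<in> \<C>" for S
      using sub that unfolding pairwise_adjacent_def by blast
    ultimately have "pairwise adjacent (\<Union>\<C>)"
      using pairwise_chain_Union by blast
    moreover have "C0 \<subseteq> \<Union>\<C>"
      using \<open>\<C> \<noteq> {}\<close> sub by blast
    moreover have "\<Union>\<C> \<subseteq> pts"
      using sub unfolding pairwise_adjacent_def by blast
    ultimately show "\<Union>\<C> \<in> ?A"
      unfolding pairwise_adjacent_def by blast
  qed
  then obtain M where M: "C0 \<subseteq> M" "pairwise_adjacent M" "\<And>X. X \<in> ?A \<Longrightarrow> M \<subseteq> X \<Longrightarrow> X = M"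
    by auto
  show ?thesis
  proof (rule that[OF M(1,2)])
    fix Y assume "pairwise_adjacent Y" "M \<subseteq> Y"
    then show "Y = M"
      using M(1) M(3)[of Y] by auto
  qed
qed

lemma pencil_subset_grass_closure:
  assumes L: "line_pencil L H B" and "L \<subseteq> X"
  shows "pencil n k H B \<subseteq> grass_closure n k X"
  unfolding grass_closure_def
proof (rule Inter_greatest)
  fix Y assume "Y \<in> {Y. grass_subspace n k Y \<and> X \<subseteq> Y}"
  then have Y: "grass_subspace n k Y" "X \<subseteq> Y"
    by auto
  obtain U U' where "U \<in> L" "U' \<in> L" "U \<noteq> U'"
    using L by (rule line_pencil_two_points)
  moreover have "L \<subseteq> pencil n k H B"
    using L unfolding line_pencil_def by simp
  ultimately have "two_pts (pencil n k H B \<inter> Y)"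
    using assms(2) Y(2) unfolding two_pts_def by blast
  moreover have "is_pencil n k (pencil n k H B)"
    using L unfolding line_pencil_def is_pencil_def by blast
  ultimately show "pencil n k H B \<subseteq> Y"
    using Y(1) unfolding grass_subspace_def by blast
qed

lemma line_subset_plane:
  assumes "line_pencil L H B" "Y \<subseteq> H" "B \<subseteq> Z"
  shows "L \<subseteq> pencil n k Y Z \<inter> pts"
proof
  fix U assume "U \<in> L"
  note U = line_pencil_points[OF assms(1) this]
  then show "U \<in> pencil n k Y Z \<inter> pts"
    using assms(2,3) by (auto simp: pencil_iff)
qed

lemma plane_bounds_line:
  assumes L: "line_pencil L H B" and Z: "lsubspace n Z" and "L \<subseteq> pencil n k Y Z"
  shows "Y \<subseteq> H" "B \<subseteq> Z"
proof -
  obtain U U' where UU': "U \<in> L" "U' \<in> L" "U \<noteq> U'"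
    using L by (rule line_pencil_two_points)
  then have "U \<in> pencil n k Y Z" "U' \<in> pencil n k Y Z"
    using assms(3) by blast+
  then have "Y \<subseteq> U" "Y \<subseteq> U'" "U \<subseteq> Z" "U' \<subseteq> Z"
    by (simp_all add: pencil_iff)
  then show "Y \<subseteq> H" "B \<subseteq> Z"
    using line_pencil_meet_join[OF L UU'] lsum_least[OF Z, of U U'] by auto
qed

lemma spine_plane_intro:
  assumes "lsubspace n Y" "lsubspace n Z" "Y \<subseteq> Z"
    and "(ldim Y = k - 2 \<and> ldim Z = k + 1) \<or> (ldim Y = k - 1 \<and> ldim Z = k + 2)"
    and L1: "line_pencil L1 H1 B1" "Y \<subseteq> H1" "B1 \<subseteq> Z"
    and L2: "line_pencil L2 H2 B2" "Y \<subseteq> H2" "B2 \<subseteq> Z"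
    and "L1 \<noteq> L2"
  shows "spine_plane n k W m (pencil n k Y Z \<inter> pts)"
proof -
  have "grass_plane n k (pencil n k Y Z)"
    unfolding grass_plane_iff using assms(1-4) by blast
  moreover have "L1 \<in> slines n k W m" "L2 \<in> slines n k W m"
    using L1(1) L2(1) slines_iff_line_pencil by blast+
  ultimately show ?thesis
    unfolding spine_plane_def
    using line_subset_plane[OF L1] line_subset_plane[OF L2] \<open>L1 \<noteq> L2\<close>
    by (intro conjI exI[of _ "pencil n k Y Z"] exI[of _ L1] exI[of _ L2]) simp_all
qed

lemma pi_rel_intro:
  assumes "lsubspace n Y" "lsubspace n Z" "Y \<subseteq> Z"
    and "(ldim Y = k - 2 \<and> ldim Z = k + 1) \<or> (ldim Y = k - 1 \<and> ldim Z = k + 2)"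
    and L1: "line_pencil L1 H1 B1" "Y \<subseteq> H1" "B1 \<subseteq> Z"
    and L2: "line_pencil L2 H2 B2" "Y \<subseteq> H2" "B2 \<subseteq> Z"
    and "L1 \<noteq> L2"
  shows "pi_rel n k W m L1 L2"
  unfolding pi_rel_def
  using spine_plane_intro[OF assms] line_subset_plane[OF L1] line_subset_plane[OF L2]
  by (intro exI[of _ "pencil n k Y Z \<inter> pts"]) simp

lemma line_pencil_subset_pencil: "line_pencil L H B \<Longrightarrow> L \<subseteq> pencil n k H B"
  unfolding line_pencil_def by simp

lemma line_pencil_Sub: "line_pencil L H B \<Longrightarrow> H \<in> Sub n (k - 1) \<and> B \<in> Sub n (k + 1)"
  unfolding line_pencil_def by simp

section \<open>Planes and \<pi>-cliques\<close>

lemma pi_rel_imp_plane: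
  assumes L1: "line_pencil L1 H1 B1" and L2: "line_pencil L2 H2 B2" and "pi_rel n k W m L1 L2"
  obtains Y Z where "lsubspace n Y" "lsubspace n Z"
    "(ldim Y = k - 2 \<and> ldim Z = k + 1) \<or> (ldim Y = k - 1 \<and> ldim Z = k + 2)"
    "Y \<subseteq> H1" "B1 \<subseteq> Z" "Y \<subseteq> H2" "B2 \<subseteq> Z"
proof -
  obtain E where E: "spine_plane n k W m E" "L1 \<subseteq> E" "L2 \<subseteq> E"
    using assms(3) unfolding pi_rel_def by blast
  then obtain Y Z where YZ: "lsubspace n Y" "lsubspace n Z"
      "(ldim Y = k - 2 \<and> ldim Z = k + 1) \<or> (ldim Y = k - 1 \<and> ldim Z = k + 2)"
      "E = pencil n k Y Z \<inter> pts"
    unfolding spine_plane_def grass_plane_iff by blast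
  have sub: "L1 \<subseteq> pencil n k Y Z" "L2 \<subseteq> pencil n k Y Z"
    using E(2,3) YZ(4) by auto
  show ?thesis
    by (rule that[OF YZ(1-3) plane_bounds_line[OF L1 YZ(2) sub(1)] plane_bounds_line[OF L2 YZ(2) sub(2)]])
qed

lemma pi_rel_imp_common_vertex_or_top:
  assumes L1: "line_pencil L1 H1 B1" and L2: "line_pencil L2 H2 B2" and "L1 \<noteq> L2"
    and "pi_rel n k W m L1 L2"
  shows "(H1 = H2 \<and> ldim (B1 \<inter> B2) = k) \<or> (B1 = B2 \<and> ldim (lsum H1 H2) = k)"
proof -
  note h1 = line_pencil_spaces[OF L1] and h2 = line_pencil_spaces[OF L2]
  obtain Y Z where YZ: "lsubspace n Y" "lsubspace n Z"
      "(ldim Y = k - 2 \<and> ldim Z = k + 1) \<or> (ldim Y = k - 1 \<and> ldim Z = k + 2)"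
    and b1: "Y \<subseteq> H1" "B1 \<subseteq> Z" and b2: "Y \<subseteq> H2" "B2 \<subseteq> Z"
    using pi_rel_imp_plane[OF L1 L2 assms(4)] .
  have not_both: "H1 \<noteq> H2 \<or> B1 \<noteq> B2"
    using line_pencil_eq[OF L1] L2 \<open>L1 \<noteq> L2\<close> by blast
  from YZ(3) show ?thesis
  proof
    assume dims: "ldim Y = k - 2 \<and> ldim Z = k + 1"
    have "B1 = Z" "B2 = Z"
      using lsubspace_eq_if_ldim_le[OF h1(3) YZ(2) b1(2)] lsubspace_eq_if_ldim_le[OF h2(3) YZ(2) b2(2)]
        dims h1(4) h2(4) by simp_all
    then have "H1 \<noteq> H2"
      using not_both by blast
    have "ldim Y \<le> ldim (H1 \<inter> H2)"
      using ldim_mono[OF lsubspace_Int[OF h1(1) h2(1)]] b1(1) b2(1) by blast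
    moreover have "ldim (H1 \<inter> H2) < k - 1"
      using ldim_Int_less[OF h1(1) h2(1)] h1(2) h2(2) \<open>H1 \<noteq> H2\<close> by simp
    ultimately have "Suc (ldim (H1 \<inter> H2)) = k - 1"
      using dims k_gt_1 by linarith
    then have "ldim (lsum H1 H2) = k"
      using ldim_lsum_adjacent[OF h1(1) h2(1) h1(2) h2(2)] k_gt_1 by simp
    then show ?thesis
      using \<open>B1 = Z\<close> \<open>B2 = Z\<close> by simp
  next
    assume dims: "ldim Y = k - 1 \<and> ldim Z = k + 2"
    have "Y = H1" "Y = H2"
      using lsubspace_eq_if_ldim_le[OF YZ(1) h1(1) b1(1)] lsubspace_eq_if_ldim_le[OF YZ(1) h2(1) b2(1)]
        dims h1(2) h2(2) by simp_all
    then have "B1 \<noteq> B2"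
      using not_both by blast
    then have "Suc (ldim (B1 \<inter> B2)) = Suc k"
      using ldim_Int_in_Suc[OF h1(3) h2(3) YZ(2), of "Suc k"] h1(4) h2(4) b1(2) b2(2) dims by simp
    then show ?thesis
      using \<open>Y = H1\<close> \<open>Y = H2\<close> by simp
  qed
qed

lemma pi_rel_if_common_vertex:
  assumes L1: "line_pencil L1 H B1" and L2: "line_pencil L2 H B2" and "L1 \<noteq> L2"
    and "ldim (B1 \<inter> B2) = k"
  shows "pi_rel n k W m L1 L2"
proof -
  note h1 = line_pencil_spaces[OF L1] and h2 = line_pencil_spaces[OF L2]
  have Z: "lsubspace n (lsum B1 B2)" "ldim (lsum B1 B2) = k + 2"
    using lsubspace_lsum[OF h1(3) h2(3)] ldim_lsum_adjacent[OF h1(3) h2(3) h1(4) h2(4)] assms(4) by auto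
  have "B1 \<subseteq> lsum B1 B2" "B2 \<subseteq> lsum B1 B2"
    using lsum_upper1[OF h2(3)] lsum_upper2[OF h1(3)] by auto
  then show ?thesis
    using pi_rel_intro[OF h1(1) Z(1) _ _ L1 order_refl _ L2 order_refl _ \<open>L1 \<noteq> L2\<close>] h1(2,5) Z(2)
    by auto
qed

lemma pi_rel_if_common_top:
  assumes L1: "line_pencil L1 H1 B" and L2: "line_pencil L2 H2 B" and "L1 \<noteq> L2"
    and "ldim (lsum H1 H2) = k"
  shows "pi_rel n k W m L1 L2"
proof -
  note h1 = line_pencil_spaces[OF L1] and h2 = line_pencil_spaces[OF L2]
  have "H1 \<noteq> H2"
    using line_pencil_eq[OF L1] L2 \<open>L1 \<noteq> L2\<close> by blast
  have "Suc (ldim (H1 \<inter> H2)) = k - 1"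
    using ldim_Int_in_Suc[OF h1(1) h2(1) lsubspace_lsum[OF h1(1) h2(1)], of "k - 1"] h1(2) h2(2)
      \<open>H1 \<noteq> H2\<close> lsum_upper1[OF h2(1), of H1] lsum_upper2[OF h1(1), of H2] assms(4) k_gt_1
    by simp
  then have Y: "lsubspace n (H1 \<inter> H2)" "ldim (H1 \<inter> H2) = k - 2"
    using lsubspace_Int[OF h1(1) h2(1)] by auto
  show ?thesis
    using pi_rel_intro[OF Y(1) h1(3) _ _ L1 _ order_refl L2 _ order_refl \<open>L1 \<noteq> L2\<close>] h1(4,5) Y(2)
    by auto
qed

lemma pi_clique_line_pencil: "pi_clique n k W m K \<Longrightarrow> L \<in> K \<Longrightarrow> \<exists>H B. line_pencil L H B"
  unfolding pi_clique_def slines_iff_line_pencil[symmetric] by blast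

lemma pi_clique_common_vertex:
  assumes K: "pi_clique n k W m K" and "L1 \<in> K" "L2 \<in> K" "L1 \<noteq> L2"
    and L1: "line_pencil L1 H B1" and L2: "line_pencil L2 H B2"
  shows "\<forall>L\<in>K. \<exists>B. line_pencil L H B"
proof
  fix L assume "L \<in> K"
  obtain H' B' where L: "line_pencil L H' B'"
    using pi_clique_line_pencil[OF K \<open>L \<in> K\<close>] by blast
  have "H' = H"
  proof (rule ccontr)
    assume "H' \<noteq> H"
    then have "L \<noteq> L1" "L \<noteq> L2"
      using line_pencil_unique[OF L1, of H' B'] line_pencil_unique[OF L2, of H' B'] L by auto
    then have "pi_rel n k W m L L1" "pi_rel n k W m L L2"
      using K assms(2,3) \<open>L \<in> K\<close> unfolding pi_clique_def by blast+
    then have "B' = B1" "B' = B2"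
      using pi_rel_imp_common_vertex_or_top[OF L L1 \<open>L \<noteq> L1\<close>]
        pi_rel_imp_common_vertex_or_top[OF L L2 \<open>L \<noteq> L2\<close>] \<open>H' \<noteq> H\<close> by auto
    then show False
      using line_pencil_eq[OF L1] L2 \<open>L1 \<noteq> L2\<close> by simp
  qed
  then show "\<exists>B. line_pencil L H B"
    using L by blast
qed

lemma pi_clique_common_top:
  assumes K: "pi_clique n k W m K" and "L1 \<in> K" "L2 \<in> K" "L1 \<noteq> L2"
    and L1: "line_pencil L1 H1 B" and L2: "line_pencil L2 H2 B"
  shows "\<forall>L\<in>K. \<exists>H. line_pencil L H B"
proof
  fix L assume "L \<in> K"
  obtain H' B' where L: "line_pencil L H' B'"
    using pi_clique_line_pencil[OF K \<open>L \<in> K\<close>] by blast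
  have "B' = B"
  proof (rule ccontr)
    assume "B' \<noteq> B"
    then have "L \<noteq> L1" "L \<noteq> L2"
      using line_pencil_unique[OF L1, of H' B'] line_pencil_unique[OF L2, of H' B'] L by auto
    then have "pi_rel n k W m L L1" "pi_rel n k W m L L2"
      using K assms(2,3) \<open>L \<in> K\<close> unfolding pi_clique_def by blast+
    then have "H' = H1" "H' = H2"
      using pi_rel_imp_common_vertex_or_top[OF L L1 \<open>L \<noteq> L1\<close>]
        pi_rel_imp_common_vertex_or_top[OF L L2 \<open>L \<noteq> L2\<close>] \<open>B' \<noteq> B\<close> by auto
    then show False
      using line_pencil_eq[OF L1] L2 \<open>L1 \<noteq> L2\<close> by simp
  qed
  then show "\<exists>H. line_pencil L H B"
    using L by blast
qed

lemma pi_clique_pair_cases: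
  assumes K: "pi_clique n k W m K" and "L \<in> K" "L' \<in> K" "L \<noteq> L'"
    and L: "line_pencil L H B" and L': "line_pencil L' H' B'"
  shows "(H = H' \<and> ldim (B \<inter> B') = k) \<or> (B = B' \<and> ldim (lsum H H') = k)"
proof -
  have "pi_rel n k W m L L'"
    using K assms(2-4) unfolding pi_clique_def by blast
  then show ?thesis
    using pi_rel_imp_common_vertex_or_top[OF L L' \<open>L \<noteq> L'\<close>] by blast
qed

lemma pi_clique_lines_share_vertex_or_top:
  assumes K: "pi_clique n k W m K" and "L \<in> K" "L' \<in> K"
    and L: "line_pencil L H B" and L': "line_pencil L' H' B'"
  shows "H = H' \<or> B = B'"
proof (cases "L = L'")
  case True
  then show ?thesis
    using line_pencil_unique[OF L] L' by blast
next
  case False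
  then show ?thesis
    using pi_clique_pair_cases[OF K assms(2,3) False L L'] by blast
qed

lemma pi_clique_common_vertex_or_top:
  assumes K: "pi_clique n k W m K"
  shows "(\<exists>H. \<forall>L\<in>K. \<exists>B. line_pencil L H B) \<or> (\<exists>B. \<forall>L\<in>K. \<exists>H. line_pencil L H B)"
proof (cases "\<exists>L1\<in>K. \<exists>L2\<in>K. L1 \<noteq> L2")
  case True
  then obtain L1 L2 where L12: "L1 \<in> K" "L2 \<in> K" "L1 \<noteq> L2"
    by blast
  obtain H1 B1 H2 B2 where L1: "line_pencil L1 H1 B1" and L2: "line_pencil L2 H2 B2"
    using pi_clique_line_pencil[OF K L12(1)] pi_clique_line_pencil[OF K L12(2)] by blast
  have "H1 = H2 \<or> B1 = B2"
    using pi_clique_lines_share_vertex_or_top[OF K L12(1,2) L1 L2] .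
  then show ?thesis
    using pi_clique_common_vertex[OF K L12 L1] pi_clique_common_top[OF K L12 L1] L2 by blast
next
  case no_two: False
  show ?thesis
  proof (cases "K = {}")
    case False
    then obtain L0 where "L0 \<in> K"
      by blast
    then have "K = {L0}"
      using no_two by blast
    obtain H B where "line_pencil L0 H B"
      using pi_clique_line_pencil[OF K \<open>L0 \<in> K\<close>] by blast
    then show ?thesis
      using \<open>K = {L0}\<close> by blast
  qed simp
qed

lemma pi_clique_points_pairwise_adjacent:
  assumes K: "pi_clique n k W m K"
  shows "pairwise_adjacent (\<Union>K)"
proof -
  have "\<Union>K \<subseteq> pts"
  proof
    fix U assume "U \<in> \<Union>K"
    then obtain L where "L \<in> K" "U \<in> L"
      by blast
    moreover obtain H B where "line_pencil L H B"
      using pi_clique_line_pencil[OF K \<open>L \<in> K\<close>] by blast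
    ultimately show "U \<in> pts"
      using line_pencil_points(1) by blast
  qed
  moreover have "adjacent a b" if ab: "a \<in> \<Union>K" "b \<in> \<Union>K" "a \<noteq> b" for a b
  proof -
    obtain La Lb where La: "La \<in> K" "a \<in> La" and Lb: "Lb \<in> K" "b \<in> Lb"
      using ab(1,2) by blast
    obtain Ha Ba Hb Bb where ra: "line_pencil La Ha Ba" and rb: "line_pencil Lb Hb Bb"
      using pi_clique_line_pencil[OF K La(1)] pi_clique_line_pencil[OF K Lb(1)] by blast
    note pa = line_pencil_points[OF ra La(2)] and pb = line_pencil_points[OF rb Lb(2)]
    have "Ha = Hb \<or> Ba = Bb"
      using pi_clique_lines_share_vertex_or_top[OF K La(1) Lb(1) ra rb] .
    then have "Ha \<subseteq> b \<or> b \<subseteq> Ba"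
      using pb(4,5) by blast
    then show "adjacent a b"
      by (rule adjacent_if_star_or_top[OF pa(2,3) pb(2,3) ab(3) line_pencil_spaces(1,2)[OF ra] pa(4)
            line_pencil_spaces(3,4)[OF ra] pa(5)])
  qed
  ultimately show ?thesis
    unfolding pairwise_adjacent_def pairwise_def by blast
qed

lemma line_pencil_other_point: "line_pencil L H B \<Longrightarrow> \<exists>a\<in>L. a \<noteq> U"
  by (metis line_pencil_two_points)

lemma line_pencil_meet_pencil_point:
  assumes "line_pencil L H B" "a \<in> L" "U \<in> pencil n k H B" "a \<noteq> U"
  shows "a \<inter> U = H"
  using pencil_meet_join(1)[of H B a U] line_pencil_Sub[OF assms(1)]
    line_pencil_subset_pencil[OF assms(1)] assms(2-4) by auto

text \<open>Otherwise B1 \<inter> B2 = U, and points a \<in> L1, b \<in> L2 other than U would meet inside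
  H1 \<inter> H2, which is too small for adjacency.\<close>
lemma semibundle_lines_common_vertex_or_top:
  assumes X: "pairwise_adjacent X"
    and L1: "line_pencil L1 H1 B1" "L1 \<subseteq> X" and L2: "line_pencil L2 H2 B2" "L2 \<subseteq> X"
    and U: "U \<in> pencil n k H1 B1" "U \<in> pencil n k H2 B2"
  shows "H1 = H2 \<or> B1 = B2"
proof (rule ccontr)
  assume "\<not> (H1 = H2 \<or> B1 = B2)"
  then have "H1 \<noteq> H2" "B1 \<noteq> B2"
    by auto
  note h1 = line_pencil_spaces[OF L1(1)] and h2 = line_pencil_spaces[OF L2(1)]
  have u: "lsubspace n U" "ldim U = k" "U \<subseteq> B1" "U \<subseteq> B2"
    using U by (auto simp: pencil_iff)
  obtain a b where a: "a \<in> L1" "a \<noteq> U" and b: "b \<in> L2" "b \<noteq> U"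
    using line_pencil_other_point[OF L1(1)] line_pencil_other_point[OF L2(1)] by blast
  have "a \<inter> U = H1" "b \<inter> U = H2"
    using line_pencil_meet_pencil_point[OF L1(1) a(1) U(1) a(2)]
      line_pencil_meet_pencil_point[OF L2(1) b(1) U(2) b(2)] by auto
  then have "a \<noteq> b"
    using \<open>H1 \<noteq> H2\<close> by auto
  then have "Suc (ldim (a \<inter> b)) = k"
    using X a(1) b(1) L1(2) L2(2) unfolding pairwise_adjacent_def pairwise_def adjacent_def by blast
  have "B1 \<inter> B2 = U"
    using Int_eq_if_ldim[OF h1(3) h2(3) u(1)] h1(4) h2(4) u \<open>B1 \<noteq> B2\<close> by simp
  then have "a \<inter> b \<subseteq> H1 \<inter> H2"
    using line_pencil_points(5)[OF L1(1) a(1)] line_pencil_points(5)[OF L2(1) b(1)]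
      \<open>a \<inter> U = H1\<close> \<open>b \<inter> U = H2\<close> by blast
  then have "ldim (a \<inter> b) \<le> ldim (H1 \<inter> H2)"
    using ldim_mono[OF lsubspace_Int[OF h1(1) h2(1)]] by blast
  moreover have "ldim (H1 \<inter> H2) < k - 1"
    using ldim_Int_less[OF h1(1) h2(1)] h1(2) h2(2) \<open>H1 \<noteq> H2\<close> by simp
  ultimately show False
    using \<open>Suc (ldim (a \<inter> b)) = k\<close> by linarith
qed

lemma semibundle_pi_clique:
  assumes X: "pairwise_adjacent X"
  shows "pi_clique n k W m (semibundle n k W m U X)"
  unfolding pi_clique_def
proof (intro conjI ballI impI)
  show "semibundle n k W m U X \<subseteq> slines n k W m"
    unfolding semibundle_def by blast
next
  fix L1 L2 assume L12: "L1 \<in> semibundle n k W m U X" "L2 \<in> semibundle n k W m U X" "L1 \<noteq> L2"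
  have "L1 \<in> slines n k W m" "U \<in> pencil_of n k L1" "L1 \<subseteq> X"
    "L2 \<in> slines n k W m" "U \<in> pencil_of n k L2" "L2 \<subseteq> X"
    using L12(1,2) unfolding semibundle_def by auto
  moreover obtain H1 B1 H2 B2 where L1: "line_pencil L1 H1 B1" and L2: "line_pencil L2 H2 B2"
    using calculation(1,4) unfolding slines_iff_line_pencil by blast
  ultimately have U: "U \<in> pencil n k H1 B1" "U \<in> pencil n k H2 B2" and X12: "L1 \<subseteq> X" "L2 \<subseteq> X"
    using pencil_of_eq[OF L1] pencil_of_eq[OF L2] by auto
  note h1 = line_pencil_spaces[OF L1] and h2 = line_pencil_spaces[OF L2]
  have u: "lsubspace n U" "ldim U = k" "H1 \<subseteq> U" "U \<subseteq> B1" "H2 \<subseteq> U" "U \<subseteq> B2"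
    using U by (auto simp: pencil_iff)
  from semibundle_lines_common_vertex_or_top[OF X L1 X12(1) L2 X12(2) U]
  show "pi_rel n k W m L1 L2"
  proof
    assume "H1 = H2"
    then have "B1 \<noteq> B2"
      using line_pencil_eq[OF L1] L2 L12(3) by blast
    then have "ldim (B1 \<inter> B2) < Suc k"
      using ldim_Int_less[OF h1(3) h2(3)] h1(4) h2(4) by simp
    moreover have "k \<le> ldim (B1 \<inter> B2)"
      using ldim_mono[OF lsubspace_Int[OF h1(3) h2(3)], of U] u by simp
    ultimately show ?thesis
      using pi_rel_if_common_vertex[OF L1 L2[folded \<open>H1 = H2\<close>] L12(3)] by simp
  next
    assume "B1 = B2"
    then have "H1 \<noteq> H2"
      using line_pencil_eq[OF L1] L2 L12(3) by blast
    then have "k - 1 < ldim (lsum H1 H2)"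
      using ldim_lsum_greater[OF h1(1) h2(1)] h1(2) h2(2) by simp
    moreover have "ldim (lsum H1 H2) \<le> k"
      using ldim_mono[OF u(1) lsum_least[OF u(1) u(3) u(5)]] u(2) by simp
    ultimately show ?thesis
      using pi_rel_if_common_top[OF L1 L2[folded \<open>B1 = B2\<close>] L12(3)] k_gt_1 by simp
  qed
qed

lemma max_pi_clique_eq_semibundle:
  assumes K: "max_pi_clique n k W m K" and C0: "pairwise_adjacent C0" "\<Union>K \<subseteq> C0"
    and U: "U \<in> grass_closure n k C0" "\<And>L. L \<in> K \<Longrightarrow> U \<in> pencil_of n k L"
  shows "\<exists>X U. max_strong_subspace n k W m X \<and> U \<in> grass_closure n k X \<and> K = semibundle n k W m U X"
proof -
  obtain X where X: "C0 \<subseteq> X" "pairwise_adjacent X" "\<And>Y. pairwise_adjacent Y \<Longrightarrow> X \<subseteq> Y \<Longrightarrow> Y = X"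
    using exists_maximal_pairwise_adjacent[OF C0(1)] by blast
  have "K \<subseteq> slines n k W m"
    using K unfolding max_pi_clique_def pi_clique_def by blast
  then have "K \<subseteq> semibundle n k W m U X"
    using C0(2) X(1) U(2) unfolding semibundle_def by blast
  then have "K = semibundle n k W m U X"
    using K semibundle_pi_clique[OF X(2)] unfolding max_pi_clique_def by blast
  moreover have "U \<in> grass_closure n k X"
    using U(1) grass_closure_mono[OF X(1)] by blast
  ultimately show ?thesis
    using max_strong_subspace_if_maximal[OF X(2,3)] by blast
qed

lemma max_pi_clique_eq_flat:
  assumes K: "max_pi_clique n k W m K" and E: "spine_plane n k W m E" and "\<And>L. L \<in> K \<Longrightarrow> L \<subseteq> E"
  shows "K = flat n k W m E"
proof -
  have "K \<subseteq> slines n k W m"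
    using K unfolding max_pi_clique_def pi_clique_def by blast
  then have "K \<subseteq> flat n k W m E"
    using assms(3) unfolding flat_def by blast
  moreover have "pi_clique n k W m (flat n k W m E)"
    using E unfolding pi_clique_def flat_def pi_rel_def by blast
  ultimately show ?thesis
    using K unfolding max_pi_clique_def by blast
qed

lemma common_vertex_tops_in_lsum:
  assumes K: "pi_clique n k W m K" and H: "\<forall>L\<in>K. \<exists>B. line_pencil L H B"
    and L12: "L1 \<in> K" "L2 \<in> K" "L1 \<noteq> L2" and L1: "line_pencil L1 H B1" and L2: "line_pencil L2 H B2"
    and no_common: "\<forall>U. \<exists>L\<in>K. U \<notin> pencil_of n k L"
  shows "ldim (B1 \<inter> B2) = k" and "L \<in> K \<Longrightarrow> line_pencil L H B \<Longrightarrow> B \<subseteq> lsum B1 B2"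
proof -
  define \<B> where "\<B> = {B. \<exists>L\<in>K. line_pencil L H B}"
  have "B1 \<noteq> B2"
    using line_pencil_eq[OF L1] L2 L12(3) by blast
  have B12: "B1 \<in> \<B>" "B2 \<in> \<B>"
    using L1 L2 L12 unfolding \<B>_def by blast+
  have fam: "lsubspace n B \<and> ldim B = Suc k" if "B \<in> \<B>" for B
    using that line_pencil_spaces(3,4) unfolding \<B>_def by blast
  have meet: "ldim (B \<inter> B') = k" if BB': "B \<in> \<B>" "B' \<in> \<B>" "B \<noteq> B'" for B B'
  proof -
    obtain L L' where L: "L \<in> K" "line_pencil L H B" and L': "L' \<in> K" "line_pencil L' H B'"
      using BB'(1,2) unfolding \<B>_def by blast
    moreover have "L \<noteq> L'"
      using line_pencil_unique[OF L(2), of H B'] L'(2) BB'(3) by auto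
    ultimately show ?thesis
      using pi_clique_pair_cases[OF K] BB'(3) by blast
  qed
  show "ldim (B1 \<inter> B2) = k"
    using meet[OF B12 \<open>B1 \<noteq> B2\<close>] .
  then have "B1 \<inter> B2 \<in> pencil n k H B1"
    using lsubspace_Int[OF line_pencil_spaces(3)[OF L1] line_pencil_spaces(3)[OF L2]]
      line_pencil_spaces(5)[OF L1] line_pencil_spaces(5)[OF L2] by (auto simp: pencil_iff)
  obtain L3 where L3: "L3 \<in> K" "B1 \<inter> B2 \<notin> pencil_of n k L3"
    using no_common by blast
  obtain B3 where "line_pencil L3 H B3"
    using H L3(1) by blast
  then have "B3 \<in> \<B>" "\<not> B1 \<inter> B2 \<subseteq> B3"
    using L3 \<open>B1 \<inter> B2 \<in> pencil n k H B1\<close> pencil_of_eq unfolding \<B>_def by (auto simp: pencil_iff)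
  then show "B \<subseteq> lsum B1 B2" if "L \<in> K" "line_pencil L H B"
    using adjacent_family_subset_lsum[OF fam meet B12 _ \<open>B1 \<noteq> B2\<close>, of B3 B] that
    unfolding \<B>_def by blast
qed

lemma common_top_vertices_contain_Int:
  assumes K: "pi_clique n k W m K" and B: "\<forall>L\<in>K. \<exists>H. line_pencil L H B"
    and L12: "L1 \<in> K" "L2 \<in> K" "L1 \<noteq> L2" and L1: "line_pencil L1 H1 B" and L2: "line_pencil L2 H2 B"
    and no_common: "\<forall>U. \<exists>L\<in>K. U \<notin> pencil_of n k L"
  shows "ldim (lsum H1 H2) = k" and "L \<in> K \<Longrightarrow> line_pencil L H B \<Longrightarrow> H1 \<inter> H2 \<subseteq> H"
proof -
  define \<H> where "\<H> = {H. \<exists>L\<in>K. line_pencil L H B}"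
  have "H1 \<noteq> H2"
    using line_pencil_eq[OF L1] L2 L12(3) by blast
  have H12: "H1 \<in> \<H>" "H2 \<in> \<H>"
    using L1 L2 L12 unfolding \<H>_def by blast+
  have fam: "lsubspace n H \<and> ldim H = k - 1" if "H \<in> \<H>" for H
    using that line_pencil_spaces(1,2) unfolding \<H>_def by blast
  have join: "ldim (lsum H H') = Suc (k - 1)" if HH': "H \<in> \<H>" "H' \<in> \<H>" "H \<noteq> H'" for H H'
  proof -
    obtain L L' where L: "L \<in> K" "line_pencil L H B" and L': "L' \<in> K" "line_pencil L' H' B"
      using HH'(1,2) unfolding \<H>_def by blast
    moreover have "L \<noteq> L'"
      using line_pencil_unique[OF L(2), of H' B] L'(2) HH'(3) by auto
    ultimately show ?thesis
      using pi_clique_pair_cases[OF K, of L L' H B H' B] HH'(3) k_gt_1 by auto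
  qed
  show "ldim (lsum H1 H2) = k"
    using join[OF H12 \<open>H1 \<noteq> H2\<close>] k_gt_1 by simp
  then have "lsum H1 H2 \<in> pencil n k H1 B"
    using lsubspace_lsum[OF line_pencil_spaces(1)[OF L1] line_pencil_spaces(1)[OF L2]]
      lsum_upper1[OF line_pencil_spaces(1)[OF L2], of H1]
      lsum_least[OF line_pencil_spaces(3)[OF L1] line_pencil_spaces(5)[OF L1] line_pencil_spaces(5)[OF L2]]
    by (auto simp: pencil_iff)
  obtain L3 where L3: "L3 \<in> K" "lsum H1 H2 \<notin> pencil_of n k L3"
    using no_common by blast
  obtain H3 where "line_pencil L3 H3 B"
    using B L3(1) by blast
  then have "H3 \<in> \<H>" "\<not> H3 \<subseteq> lsum H1 H2"
    using L3 \<open>lsum H1 H2 \<in> pencil n k H1 B\<close> pencil_of_eq unfolding \<H>_def by (auto simp: pencil_iff)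
  then show "H1 \<inter> H2 \<subseteq> H" if "L \<in> K" "line_pencil L H B"
    using adjacent_family_Int_subset[OF fam join H12 _ \<open>H1 \<noteq> H2\<close>, of H3 H] that
    unfolding \<H>_def by blast
qed

lemma max_pi_clique_flat_if_common_vertex:
  assumes K: "max_pi_clique n k W m K" and H: "\<forall>L\<in>K. \<exists>B. line_pencil L H B"
    and L12: "L1 \<in> K" "L2 \<in> K" "L1 \<noteq> L2" and no_common: "\<forall>U. \<exists>L\<in>K. U \<notin> pencil_of n k L"
  shows "\<exists>E. spine_plane n k W m E \<and> K = flat n k W m E"
proof -
  have Kc: "pi_clique n k W m K"
    using K unfolding max_pi_clique_def by blast
  obtain B1 B2 where L1: "line_pencil L1 H B1" and L2: "line_pencil L2 H B2"
    using H L12(1,2) by blast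
  note h1 = line_pencil_spaces[OF L1] and h2 = line_pencil_spaces[OF L2]
  note tops = common_vertex_tops_in_lsum[OF Kc H L12 L1 L2 no_common]
  have Z: "lsubspace n (lsum B1 B2)" "ldim (lsum B1 B2) = k + 2"
    using lsubspace_lsum[OF h1(3) h2(3)] ldim_lsum_adjacent[OF h1(3) h2(3) h1(4) h2(4)] tops(1) by auto
  have "H \<subseteq> lsum B1 B2"
    using h1(5) tops(2)[OF L12(1) L1] by blast
  then have E: "spine_plane n k W m (pencil n k H (lsum B1 B2) \<inter> pts)"
    using spine_plane_intro[OF h1(1) Z(1) _ _ L1 order_refl tops(2)[OF L12(1) L1] L2 order_refl
        tops(2)[OF L12(2) L2] L12(3)] h1(2) Z(2) by simp
  have "L \<subseteq> pencil n k H (lsum B1 B2) \<inter> pts" if L: "L \<in> K" for L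
  proof -
    obtain B where "line_pencil L H B"
      using H L by blast
    then show ?thesis
      using line_subset_plane[OF _ order_refl tops(2)[OF L]] by blast
  qed
  then show ?thesis
    using max_pi_clique_eq_flat[OF K E] E by blast
qed

lemma max_pi_clique_flat_if_common_top:
  assumes K: "max_pi_clique n k W m K" and B: "\<forall>L\<in>K. \<exists>H. line_pencil L H B"
    and L12: "L1 \<in> K" "L2 \<in> K" "L1 \<noteq> L2" and no_common: "\<forall>U. \<exists>L\<in>K. U \<notin> pencil_of n k L"
  shows "\<exists>E. spine_plane n k W m E \<and> K = flat n k W m E"
proof -
  have Kc: "pi_clique n k W m K"
    using K unfolding max_pi_clique_def by blast
  obtain H1 H2 where L1: "line_pencil L1 H1 B" and L2: "line_pencil L2 H2 B"
    using B L12(1,2) by blast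
  note h1 = line_pencil_spaces[OF L1] and h2 = line_pencil_spaces[OF L2]
  note vertices = common_top_vertices_contain_Int[OF Kc B L12 L1 L2 no_common]
  have "H1 \<noteq> H2"
    using line_pencil_eq[OF L1] L2 L12(3) by blast
  then have "Suc (ldim (H1 \<inter> H2)) = k - 1"
    using ldim_Int_in_Suc[OF h1(1) h2(1) lsubspace_lsum[OF h1(1) h2(1)], of "k - 1"] h1(2) h2(2)
      lsum_upper1[OF h2(1), of H1] lsum_upper2[OF h1(1), of H2] vertices(1) k_gt_1 by simp
  then have Y: "lsubspace n (H1 \<inter> H2)" "ldim (H1 \<inter> H2) = k - 2"
    using lsubspace_Int[OF h1(1) h2(1)] by auto
  have "H1 \<inter> H2 \<subseteq> B"
    using h1(5) by blast
  then have E: "spine_plane n k W m (pencil n k (H1 \<inter> H2) B \<inter> pts)"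
    using spine_plane_intro[OF Y(1) h1(3) _ _ L1 vertices(2)[OF L12(1) L1] order_refl
        L2 vertices(2)[OF L12(2) L2] order_refl L12(3)] h1(4) Y(2) by simp
  have "L \<subseteq> pencil n k (H1 \<inter> H2) B \<inter> pts" if L: "L \<in> K" for L
  proof -
    obtain H where "line_pencil L H B"
      using B L by blast
    then show ?thesis
      using line_subset_plane[OF _ vertices(2)[OF L] order_refl] by blast
  qed
  then show ?thesis
    using max_pi_clique_eq_flat[OF K E] E by blast
qed

lemma pi_clique_two_lines_if_no_common_point:
  assumes K: "pi_clique n k W m K" and no_common: "\<forall>U. \<exists>L\<in>K. U \<notin> pencil_of n k L"
  obtains L1 L2 where "L1 \<in> K" "L2 \<in> K" "L1 \<noteq> L2"
proof -
  obtain L1 where "L1 \<in> K"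
    using no_common by blast
  then obtain H B where L1: "line_pencil L1 H B"
    using pi_clique_line_pencil[OF K] by blast
  obtain U U' where "U \<in> L1" "U' \<in> L1" "U \<noteq> U'"
    using L1 by (rule line_pencil_two_points)
  then have "U \<in> pencil_of n k L1"
    using pencil_of_eq[OF L1] line_pencil_subset_pencil[OF L1] by blast
  moreover obtain L2 where "L2 \<in> K" "U \<notin> pencil_of n k L2"
    using no_common by blast
  ultimately show ?thesis
    using that \<open>L1 \<in> K\<close> by blast
qed

text \<open>The empty clique is maximal only when there are no lines; it is then the empty semibundle of
  any point, which is why S must be nonempty.\<close>
lemma max_pi_clique_flat_or_semibundle:
  assumes K: "max_pi_clique n k W m K" and "pts \<noteq> {}"
  shows "(\<exists>E. spine_plane n k W m E \<and> K = flat n k W m E) \<or>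
         (\<exists>X U. max_strong_subspace n k W m X \<and> U \<in> grass_closure n k X \<and>
                K = semibundle n k W m U X)"
proof -
  have Kc: "pi_clique n k W m K"
    using K unfolding max_pi_clique_def by blast
  consider "K = {}" | L where "L \<in> K" "\<exists>U. \<forall>L\<in>K. U \<in> pencil_of n k L"
    | "\<forall>U. \<exists>L\<in>K. U \<notin> pencil_of n k L"
    by blast
  then show ?thesis
  proof cases
    case 1
    obtain P where "P \<in> pts"
      using assms(2) by blast
    then have "pairwise_adjacent {P}"
      unfolding pairwise_adjacent_def by simp
    moreover have "P \<in> grass_closure n k {P}"
      using subset_grass_closure by blast
    ultimately show ?thesis
      using max_pi_clique_eq_semibundle[OF K, of "{P}" P] 1 by simp
  next
    case (2 L)
    then obtain U where U: "\<And>L. L \<in> K \<Longrightarrow> U \<in> pencil_of n k L"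
      by blast
    obtain H B where L: "line_pencil L H B"
      using pi_clique_line_pencil[OF Kc 2(1)] by blast
    have "U \<in> grass_closure n k (\<Union>K)"
      using U[OF 2(1)] pencil_of_eq[OF L] pencil_subset_grass_closure[OF L] 2(1) by blast
    then show ?thesis
      using max_pi_clique_eq_semibundle[OF K pi_clique_points_pairwise_adjacent[OF Kc] order_refl _ U]
      by blast
  next
    case 3
    obtain L1 L2 where L12: "L1 \<in> K" "L2 \<in> K" "L1 \<noteq> L2"
      using pi_clique_two_lines_if_no_common_point[OF Kc 3] .
    from pi_clique_common_vertex_or_top[OF Kc] show ?thesis
      using max_pi_clique_flat_if_common_vertex[OF K _ L12 3] max_pi_clique_flat_if_common_top[OF K _ L12 3]
      by blast
  qed
qed

end

theorem proposition2p2: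
  fixes n k m :: nat and W :: "(nat \<Rightarrow> 'a::division_ring) set"
    and K :: "(nat \<Rightarrow> 'a) set set set"
  assumes "n \<ge> 3"
    and "1 < k" and "k < n - 1"
    and "lsubspace n W"
    and "int k - (int n - int (ldim W)) \<le> int m" and "m \<le> min k (ldim W)"
    and "max_pi_clique n k W m K"
  shows "(\<exists>E. spine_plane n k W m E \<and> K = flat n k W m E) \<or>
         (\<exists>X U. max_strong_subspace n k W m X \<and> U \<in> grass_closure n k X \<and>
                K = semibundle n k W m U X)"
proof -
  have "k + ldim W \<le> n + m"
    using assms(5) by linarith
  then have "spoints n k W m \<noteq> {}"
    using spoints_nonempty[OF assms(4)] assms(6) by simp
  then show ?thesis
    using max_pi_clique_flat_or_semibundle[OF assms(2,7)] by blast
qed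

end
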